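(* Let $\mathcal K$ be finite or countably infinite, and let $\mathcal K$, $(\mathsf Z_k,\mathcal A_k,\Psi_k,\Phi_k)$, $(\mathsf X,\mathcal B,\Pi)$ and $P$ (with $\Pi P=\Pi$) be as in the context. Let $t$ be a positive integer and suppose that for each $k\in\mathcal K$ there is a Markov transition kernel $P_k:\mathsf Z_k\times\mathcal A_k\to[0,1]$ and a constant $c_k>0$ such that (i) $\Phi_kP_k=\Phi_k$, (ii) $\|P_k^t\|_{\Phi_k}<1$, (iii) $P((k,z),\{k\}\times A)\ge c_kP_k(z,A)$ for all $z\in\mathsf Z_k$, $A\in\mathcal A_k$. Then $$1-\|P^t\|_\Pi^4\ \ge\ \Big(\inf_{k\in\mathcal K}c_k^t\Big)^2\Big(1-\sup_{k\in\mathcal K}\|P_k^t\|_{\Phi_k}^2\Big)\big[1-\lambda_1(M_P)\big].$$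
   Context: $\mathcal K$ is a finite or countably infinite set; for each $k\in\mathcal K$, $(\mathsf Z_k,\mathcal A_k)$ is a nonempty measurable space, $\Psi_k$ a nonzero finite measure on it with $\sum_{k}\Psi_k(\mathsf Z_k)<\infty$, and $\Phi_k=\Psi_k/\Psi_k(\mathsf Z_k)$. $\mathsf X=\bigcup_k\{k\}\times\mathsf Z_k$, $\mathcal B$ is generated by the sets $\{k\}\times A$ ($A\in\mathcal A_k$), and $\Pi(\{k\}\times A)=\Psi_k(A)/\sum_{k'}\Psi_{k'}(\mathsf Z_{k'})$. $P$ is a Markov transition kernel (Mtk) on $(\mathsf X,\mathcal B)$ with $\Pi P=\Pi$. For a probability measure $\omega$ and an Mtk $T$ with $\omega T=\omega$, $\|T\|_\omega$ is the operator norm of $f\mapsto\int T(\cdot,dy)f(y)$ on $L_0^2(\omega)=\{f\in L^2(\omega):\int f\,d\omega=0\}$. $\bar P$ is the Mtk on $\mathcal K$ with $\bar P(k,\{k'\})=\frac{1}{\Psi_k(\mathsf Z_k)}\sum_{k''\in\mathcal K}\int_{\mathsf Z_{k''}}\Psi_{k''}(dz)P((k'',z),\{k\}\times\mathsf Z_k)P((k'',z),\{k'\}\times\mathsf Z_{k'})$; it is reversible and positive semi-definite with respect to $\bar\Pi(\{k\})=\Pi(\{k\}\times\mathsf Z_k)$. $M_P$ denotes the matrix of $\bar P$, and $\lambda_1(M_P)$ denotes $\|\bar P\|_{\bar\Pi}$, the norm of $\bar P$ on $L_0^2(\bar\Pi)$; when $\mathcal K$ is finite this is the second largest eigenvalue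 (counting multiplicity) of $M_P$. *)

theory Defs
  imports "HOL-Probability.Probability"
begin

text \<open>Disjoint-union measurable space X = U_k {k} x Z_k, with sigma-algebra generated
  by the sets {k} x A, A in A_k.  Psi k carries (Z_k, A_k) together with Psi_k.\<close>
definition Xgen :: "'k set \<Rightarrow> ('k \<Rightarrow> 'z measure) \<Rightarrow> ('k \<times> 'z) set set" where
  "Xgen K Psi = {{k} \<times> A | k A. k \<in> K \<and> A \<in> sets (Psi k)}"

definition Xspace :: "'k set \<Rightarrow> ('k \<Rightarrow> 'z measure) \<Rightarrow> ('k \<times> 'z) set" where
  "Xspace K Psi = (SIGMA k:K. space (Psi k))"

definition total_mass :: "'k set \<Rightarrow> ('k \<Rightarrow> 'z measure) \<Rightarrow> ennreal" where
  "total_mass K Psi = (\<integral>\<^sup>+ k. emeasure (Psi k) (space (Psi k)) \<partial>count_space K)"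

definition PiX :: "'k set \<Rightarrow> ('k \<Rightarrow> 'z measure) \<Rightarrow> ('k \<times> 'z) measure" where
  "PiX K Psi = measure_of (Xspace K Psi) (Xgen K Psi)
     (\<lambda>B. (\<integral>\<^sup>+ k. emeasure (Psi k) (Pair k -` B \<inter> space (Psi k)) \<partial>count_space K)
          / total_mass K Psi)"

definition normalise :: "'z measure \<Rightarrow> 'z measure" where
  "normalise M = scale_measure (inverse (emeasure M (space M))) M"

fun kpow :: "'a measure \<Rightarrow> ('a \<Rightarrow> 'a measure) \<Rightarrow> nat \<Rightarrow> 'a \<Rightarrow> 'a measure" where
  "kpow M P 0 = return M"
| "kpow M P (Suc n) = (\<lambda>x. bind (P x) (kpow M P n))"

definition opnorm :: "'a measure \<Rightarrow> ('a \<Rightarrow> 'a measure) \<Rightarrow> real" where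
  "opnorm \<omega> T = Sup {sqrt (\<integral>x. (\<integral>y. f y \<partial>T x)\<^sup>2 \<partial>\<omega>) | f.
       f \<in> borel_measurable \<omega> \<and> integrable \<omega> (\<lambda>x. (f x)\<^sup>2) \<and>
       (\<integral>x. f x \<partial>\<omega>) = 0 \<and> (\<integral>x. (f x)\<^sup>2 \<partial>\<omega>) \<le> 1}"

definition barPi :: "'k set \<Rightarrow> ('k \<Rightarrow> 'z measure) \<Rightarrow> 'k measure" where
  "barPi K Psi = density (count_space K) (\<lambda>k. emeasure (PiX K Psi) ({k} \<times> space (Psi k)))"

definition barP_weight :: "'k set \<Rightarrow> ('k \<Rightarrow> 'z measure) \<Rightarrow> ('k \<times> 'z \<Rightarrow> ('k \<times> 'z) measure)
    \<Rightarrow> 'k \<Rightarrow> 'k \<Rightarrow> ennreal" where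
  "barP_weight K Psi P k k' =
     (\<integral>\<^sup>+ k''. (\<integral>\<^sup>+ z. emeasure (P (k'', z)) ({k} \<times> space (Psi k)) *
                        emeasure (P (k'', z)) ({k'} \<times> space (Psi k')) \<partial>Psi k'') \<partial>count_space K)
     / emeasure (Psi k) (space (Psi k))"

definition barP :: "'k set \<Rightarrow> ('k \<Rightarrow> 'z measure) \<Rightarrow> ('k \<times> 'z \<Rightarrow> ('k \<times> 'z) measure)
    \<Rightarrow> 'k \<Rightarrow> 'k measure" where
  "barP K Psi P k = density (count_space K) (barP_weight K Psi P k)"

definition lambda1 :: "'k set \<Rightarrow> ('k \<Rightarrow> 'z measure) \<Rightarrow> ('k \<times> 'z \<Rightarrow> ('k \<times> 'z) measure) \<Rightarrow> real" where
  "lambda1 K Psi P = opnorm (barPi K Psi) (barP K Psi P)"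

end

(* Split the invariant law into the blocks {k} x Z_k and write g for the block-wise mean of a
   centred f with norm at most 1.  Inside a block the minorisation P^t >= c_k^t P_k^t transfers the
   spectral gap of P_k^t, so P^t removes at least the fraction a (1 - b^2) of the within-block
   energy of f - g, where a = inf c_k^t and b = sup ||P_k^t||.  Between blocks, the energy of P g
   is the quadratic form of the projected chain M_P evaluated at the vector of block means, hence
   at most lambda_1(M_P) ||g||^2.  Testing ||P^t|| on f - tau g for an almost extremal f and small
   tau combines the two estimates into 1 - ||P^t||^4 >= a (1 - b^2) (1 - lambda_1(M_P)), and
   a^2 <= a. *)

theory Submission
  imports Defs
begin

section \<open>Square-integrable functions and variances\<close>

lemma square_integral_le_integral_square:
  fixes f :: "'a \<Rightarrow> real"
  assumes "prob_space M" "integrable M f" "integrable M (\<lambda>x. (f x)\<^sup>2)"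
  shows "(\<integral>x. f x \<partial>M)\<^sup>2 \<le> (\<integral>x. (f x)\<^sup>2 \<partial>M)"
proof -
  interpret prob_space M by fact
  show ?thesis using variance_positive[of f] variance_eq[OF assms(2,3)] by simp
qed

lemma integrable_of_square_integrable:
  fixes f :: "'a \<Rightarrow> real"
  assumes "prob_space M" "f \<in> borel_measurable M" "integrable M (\<lambda>x. (f x)\<^sup>2)"
  shows "integrable M f"
proof -
  interpret prob_space M by fact
  show ?thesis by (rule square_integrable_imp_integrable[OF assms(2)]) (use assms(3) in simp)
qed

lemma mult_le_amgm:
  fixes x y s :: real
  assumes "0 < s"
  shows "x * y \<le> (s * x\<^sup>2 + y\<^sup>2 / s) / 2"
proof -
  have "0 \<le> (s * x - y)\<^sup>2" by simp
  then have "2 * s * (x * y) \<le> s * (s * x\<^sup>2 + y\<^sup>2 / s)"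
    using assms by (simp add: power2_diff power2_eq_square algebra_simps)
  then show ?thesis using assms by (simp add: mult.assoc)
qed

lemma abs_mult_le_amgm: "\<bar>x * y\<bar> \<le> (x\<^sup>2 + y\<^sup>2) / (2::real)"
  using mult_le_amgm[of 1 "\<bar>x\<bar>" "\<bar>y\<bar>"] by (simp add: abs_mult)

lemma integrable_mult_of_square_integrable:
  fixes f g :: "'a \<Rightarrow> real"
  assumes [measurable]: "f \<in> borel_measurable M" "g \<in> borel_measurable M"
    and "integrable M (\<lambda>x. (f x)\<^sup>2)" "integrable M (\<lambda>x. (g x)\<^sup>2)"
  shows "integrable M (\<lambda>x. f x * g x)"
proof (rule Bochner_Integration.integrable_bound)
  show "integrable M (\<lambda>x. (f x)\<^sup>2 + (g x)\<^sup>2)" using assms(3,4) by simp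
  show "AE x in M. norm (f x * g x) \<le> norm ((f x)\<^sup>2 + (g x)\<^sup>2)"
  proof (intro AE_I2)
    fix x
    have "\<bar>f x * g x\<bar> \<le> (f x)\<^sup>2 + (g x)\<^sup>2"
      using abs_mult_le_amgm[of "f x" "g x"] by simp
    then show "norm (f x * g x) \<le> norm ((f x)\<^sup>2 + (g x)\<^sup>2)" by simp
  qed
qed simp

lemma integral_mult_le_amgm:
  fixes f g :: "'a \<Rightarrow> real"
  assumes "f \<in> borel_measurable M" "g \<in> borel_measurable M"
    and f2: "integrable M (\<lambda>x. (f x)\<^sup>2)" and g2: "integrable M (\<lambda>x. (g x)\<^sup>2)" and s: "0 < s"
  shows "(\<integral>x. f x * g x \<partial>M) \<le> (s * (\<integral>x. (f x)\<^sup>2 \<partial>M) + (\<integral>x. (g x)\<^sup>2 \<partial>M) / s) / 2"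
proof -
  have "(\<integral>x. f x * g x \<partial>M) \<le> (\<integral>x. (s * (f x)\<^sup>2 + (g x)\<^sup>2 / s) / 2 \<partial>M)"
    using f2 g2 mult_le_amgm[OF s]
    by (intro integral_mono integrable_mult_of_square_integrable assms) auto
  also have "\<dots> = (s * (\<integral>x. (f x)\<^sup>2 \<partial>M) + (\<integral>x. (g x)\<^sup>2 \<partial>M) / s) / 2"
    using f2 g2 by simp
  finally show ?thesis .
qed

lemma le_mult_of_amgm_bounds:
  fixes X A B l :: real
  assumes X: "\<And>s. 0 < s \<Longrightarrow> X \<le> (s * A + B / s) / 2" and A: "0 \<le> A"
    and B: "B \<le> l\<^sup>2 * A" and l: "0 \<le> l"
  shows "X \<le> l * A"
proof (cases "l = 0")
  case False
  then have "X \<le> (l * A + B / l) / 2" using X l by simp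
  also have "B / l \<le> l * A" using B l False by (simp add: divide_le_eq power2_eq_square mult_ac)
  finally show ?thesis by (simp add: mult.commute)
next
  case True
  show ?thesis
  proof (rule ccontr)
    assume "\<not> X \<le> l * A"
    then have Xp: "0 < X" using True by simp
    show False
    proof (cases "A = 0")
      case True
      then show False using X[of 1] B l \<open>l = 0\<close> Xp by simp
    next
      case False
      have "X \<le> ((X / A) * A + B / (X / A)) / 2" using X[of "X / A"] Xp A False by simp
      moreover have "B / (X / A) \<le> 0" using B \<open>l = 0\<close> Xp A False by (intro divide_nonpos_pos) auto
      ultimately show False using Xp A False by simp
    qed
  qed
qed

lemma nn_integral_variance_le:
  fixes g :: "'a \<Rightarrow> real"
  assumes "prob_space M" and g: "g \<in> borel_measurable M"
  shows "(\<integral>\<^sup>+y. ennreal ((g y - (\<integral>y. g y \<partial>M))\<^sup>2) \<partial>M) \<le> (\<integral>\<^sup>+y. ennreal ((g y - c)\<^sup>2) \<partial>M)"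
proof (cases "(\<integral>\<^sup>+y. ennreal ((g y - c)\<^sup>2) \<partial>M) = \<infinity>")
  case False
  interpret prob_space M by fact
  define E where "E = (\<integral>y. g y \<partial>M)"
  have ic2: "integrable M (\<lambda>y. (g y - c)\<^sup>2)"
    using False g by (simp add: integrable_iff_bounded less_top)
  have "integrable M (\<lambda>y. g y - c)"
    by (rule square_integrable_imp_integrable) (use g ic2 in auto)
  from Bochner_Integration.integrable_add[OF this, of "\<lambda>_. c"] have gi: "integrable M g" by simp
  have "(\<lambda>y. (g y)\<^sup>2) = (\<lambda>y. (g y - c)\<^sup>2 + 2 * c * g y - c\<^sup>2)" by (auto simp: fun_eq_iff power2_diff)
  then have g2: "integrable M (\<lambda>y. (g y)\<^sup>2)" using ic2 gi by simp
  have iE2: "integrable M (\<lambda>y. (g y - E)\<^sup>2)" using g2 gi by (simp add: power2_diff)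
  have "(\<integral>y. (g y - E)\<^sup>2 \<partial>M) = (\<integral>y. (g y)\<^sup>2 \<partial>M) - E\<^sup>2"
    unfolding E_def using variance_eq[of g] gi g2 by simp
  moreover have "(\<integral>y. (g y - c)\<^sup>2 \<partial>M) = (\<integral>y. (g y)\<^sup>2 \<partial>M) - 2 * c * E + c\<^sup>2"
    using gi g2 by (simp add: power2_diff E_def prob_space)
  moreover have "(E - c)\<^sup>2 = E\<^sup>2 - 2 * c * E + c\<^sup>2" by (simp add: power2_diff algebra_simps)
  ultimately have "(\<integral>y. (g y - E)\<^sup>2 \<partial>M) \<le> (\<integral>y. (g y - c)\<^sup>2 \<partial>M)"
    using zero_le_power2[of "E - c"] by linarith
  then show ?thesis
    unfolding E_def[symmetric]
    by (simp add: nn_integral_eq_integral[OF iE2] nn_integral_eq_integral[OF ic2])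
qed simp

lemma measure_of_sigma_sets:
  assumes "A \<subseteq> Pow \<Omega>"
  shows "measure_of \<Omega> (sigma_sets \<Omega> A) \<mu> = measure_of \<Omega> A \<mu>"
proof -
  have "sigma_sets \<Omega> A \<subseteq> Pow \<Omega>" using sigma_sets_into_sp[OF assms] by auto
  then show ?thesis unfolding measure_of_def using sigma_sets_sigma_sets_eq[OF assms] assms by simp
qed

lemma ennreal_inverse_mult_self: "(t::ennreal) \<noteq> 0 \<Longrightarrow> t < \<top> \<Longrightarrow> inverse t * t = 1"
  by (metis Groups.mult_ac(2) divide_ennreal_def ennreal_divide_self)

lemma prob_algebra_cong: assumes "sets M = sets N" shows "prob_algebra M = prob_algebra N"
  unfolding prob_algebra_def subprob_algebra_cong[OF assms] ..

lemma kpow_cong_sets: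
  assumes "sets M = sets N"
  shows "kpow M T n = kpow N T n"
  by (induction n) (simp_all add: return_sets_cong[OF assms])

lemma nn_integral_count_space_ge: "k \<in> K \<Longrightarrow> g k \<le> (\<integral>\<^sup>+k'. g k' \<partial>count_space K)"
proof -
  assume k: "k \<in> K"
  have "g k = (\<integral>\<^sup>+ k'. g k' * indicator {k} k' \<partial>count_space K)"
    using k by (simp add: nn_integral_count_space_indicator nn_integral_indicator_singleton)
  also have "\<dots> \<le> (\<integral>\<^sup>+ k'. g k' \<partial>count_space K)"
    by (intro nn_integral_mono) (auto simp: indicator_def)
  finally show ?thesis .
qed

section \<open>Integrals against Markov kernels\<close>

context
  fixes A :: "'a measure" and N :: "'a \<Rightarrow> 'b measure" and B :: "'b measure"
  assumes N: "N \<in> A \<rightarrow>\<^sub>M prob_algebra B" and A_ne: "space A \<noteq> {}"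
begin

lemma sets_bind_kernel: "sets (bind A N) = sets B"
  using measurable_space[OF N] A_ne by (intro sets_bind) (auto simp: space_prob_algebra)

lemma measurable_bind_kernel_iff: "f \<in> bind A N \<rightarrow>\<^sub>M M \<longleftrightarrow> f \<in> B \<rightarrow>\<^sub>M M"
  by (simp only: measurable_cong_sets[OF sets_bind_kernel refl])

lemma borel_measurable_integral_kernel:
  fixes h :: "'b \<Rightarrow> real"
  assumes "h \<in> borel_measurable B"
  shows "(\<lambda>y. \<integral>x. h x \<partial>N y) \<in> borel_measurable A"
  using measurable_compose[OF measurable_prob_algebraD[OF N] integral_measurable_subprob_algebra[OF assms]]
  by simp

lemma nn_integral_bind_kernel:
  "h \<in> borel_measurable B \<Longrightarrow> (\<integral>\<^sup>+x. h x \<partial>bind A N) = (\<integral>\<^sup>+y. \<integral>\<^sup>+x. h x \<partial>N y \<partial>A)"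
  using nn_integral_bind measurable_prob_algebraD[OF N] by blast

lemma AE_integrable_bind:
  fixes h :: "'b \<Rightarrow> real"
  assumes h: "integrable (bind A N) h"
  shows "AE y in A. integrable (N y) h"
proof -
  have hm: "h \<in> borel_measurable B" using h measurable_bind_kernel_iff by auto
  have "(\<integral>\<^sup>+y. \<integral>\<^sup>+x. ennreal (norm (h x)) \<partial>N y \<partial>A) \<noteq> \<infinity>"
    using h hm by (simp add: nn_integral_bind_kernel[symmetric] integrable_iff_bounded less_top)
  moreover have "(\<lambda>y. \<integral>\<^sup>+x. ennreal (norm (h x)) \<partial>N y) \<in> borel_measurable A"
    using measurable_compose[OF measurable_prob_algebraD[OF N] nn_integral_measurable_subprob_algebra]
      hm by measurable
  ultimately have "AE y in A. (\<integral>\<^sup>+x. ennreal (norm (h x)) \<partial>N y) \<noteq> \<infinity>"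
    by (intro nn_integral_PInf_AE)
  then show ?thesis
  proof (rule AE_mp, intro AE_I2 impI)
    fix y assume "y \<in> space A" "(\<integral>\<^sup>+x. ennreal (norm (h x)) \<partial>N y) \<noteq> \<infinity>"
    then show "integrable (N y) h"
      using hm measurable_space[OF N]
      by (auto simp: integrable_iff_bounded top.not_eq_extremum space_prob_algebra
               cong: measurable_cong_sets)
  qed
qed

lemma integral_bind_kernel_nonneg:
  fixes h :: "'b \<Rightarrow> real"
  assumes h: "integrable (bind A N) h" and h_nn: "\<And>x. 0 \<le> h x"
  shows "integrable A (\<lambda>y. \<integral>x. h x \<partial>N y)"
    and "(\<integral>x. h x \<partial>bind A N) = (\<integral>y. (\<integral>x. h x \<partial>N y) \<partial>A)"
proof -
  have hm: "h \<in> borel_measurable B" using h measurable_bind_kernel_iff by auto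
  have ae: "AE y in A. (\<integral>\<^sup>+x. ennreal (h x) \<partial>N y) = ennreal (\<integral>x. h x \<partial>N y)"
    using AE_integrable_bind[OF h] by eventually_elim (rule nn_integral_eq_integral, auto simp: h_nn)
  have meas: "(\<lambda>y. \<integral>x. h x \<partial>N y) \<in> borel_measurable A"
    by (rule borel_measurable_integral_kernel[OF hm])
  have nn: "AE y in A. 0 \<le> (\<integral>x. h x \<partial>N y)" by (intro AE_I2 integral_nonneg_AE) (auto simp: h_nn)
  have eq: "(\<integral>\<^sup>+x. ennreal (h x) \<partial>bind A N) = (\<integral>\<^sup>+y. ennreal (\<integral>x. h x \<partial>N y) \<partial>A)"
    using hm by (simp add: nn_integral_bind_kernel nn_integral_cong_AE[OF ae])
  have "(\<integral>\<^sup>+y. ennreal (\<integral>x. h x \<partial>N y) \<partial>A) < \<infinity>"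
    using h h_nn unfolding eq[symmetric] by (simp add: integrable_iff_bounded)
  then show "integrable A (\<lambda>y. \<integral>x. h x \<partial>N y)"
    using meas nn by (intro integrableI_nonneg) auto
  have "(\<integral>x. h x \<partial>bind A N) = enn2real (\<integral>\<^sup>+x. ennreal (h x) \<partial>bind A N)"
    by (rule integral_eq_nn_integral) (use h h_nn in auto)
  also have "\<dots> = (\<integral>y. (\<integral>x. h x \<partial>N y) \<partial>A)"
    unfolding eq using meas nn by (rule integral_eq_nn_integral[symmetric])
  finally show "(\<integral>x. h x \<partial>bind A N) = (\<integral>y. (\<integral>x. h x \<partial>N y) \<partial>A)" .
qed

lemma integral_bind_kernel:
  fixes g :: "'b \<Rightarrow> real"
  assumes g: "integrable (bind A N) g"
  shows "integrable A (\<lambda>y. \<integral>x. g x \<partial>N y)"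
    and "(\<integral>x. g x \<partial>bind A N) = (\<integral>y. (\<integral>x. g x \<partial>N y) \<partial>A)"
proof -
  define gp where "gp x = max (g x) 0" for x
  define gn where "gn x = max (- g x) 0" for x
  have g_eq: "g = (\<lambda>x. gp x - gn x)" by (auto simp: fun_eq_iff gp_def gn_def)
  have ip: "integrable (bind A N) gp" unfolding gp_def using g by auto
  have ineg: "integrable (bind A N) gn" unfolding gn_def using g by auto
  have "\<And>x. 0 \<le> gp x" "\<And>x. 0 \<le> gn x" by (simp_all add: gp_def gn_def)
  note p = integral_bind_kernel_nonneg[OF ip this(1)] and n = integral_bind_kernel_nonneg[OF ineg this(2)]
  have ae: "AE y in A. (\<integral>x. gp x \<partial>N y) - (\<integral>x. gn x \<partial>N y) = (\<integral>x. g x \<partial>N y)"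
    using AE_integrable_bind[OF ip] AE_integrable_bind[OF ineg] by eventually_elim (simp add: g_eq)
  have meas: "(\<lambda>y. \<integral>x. g x \<partial>N y) \<in> borel_measurable A"
    using g measurable_bind_kernel_iff by (auto intro: borel_measurable_integral_kernel)
  have i: "integrable A (\<lambda>y. (\<integral>x. gp x \<partial>N y) - (\<integral>x. gn x \<partial>N y))"
    using p(1) n(1) by simp
  show "integrable A (\<lambda>y. \<integral>x. g x \<partial>N y)"
    by (rule integrable_cong_AE_imp[OF i meas ae])
  have "(\<integral>x. g x \<partial>bind A N) = (\<integral>x. gp x \<partial>bind A N) - (\<integral>x. gn x \<partial>bind A N)"
    using ip ineg by (subst g_eq) simp
  also have "\<dots> = (\<integral>y. (\<integral>x. gp x \<partial>N y) - (\<integral>x. gn x \<partial>N y) \<partial>A)"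
    using p n by simp
  also have "\<dots> = (\<integral>y. (\<integral>x. g x \<partial>N y) \<partial>A)"
    by (rule integral_cong_AE[OF borel_measurable_integrable[OF i] meas ae])
  finally show "(\<integral>x. g x \<partial>bind A N) = (\<integral>y. (\<integral>x. g x \<partial>N y) \<partial>A)" .
qed

end

definition kernel_variance :: "('a \<Rightarrow> 'b measure) \<Rightarrow> ('b \<Rightarrow> real) \<Rightarrow> 'a \<Rightarrow> ennreal" where
  "kernel_variance T f x = (\<integral>\<^sup>+y. ennreal ((f y - (\<integral>y. f y \<partial>T x))\<^sup>2) \<partial>T x)"

locale invariant_kernel =
  fixes M :: "'a measure" and T :: "'a \<Rightarrow> 'a measure"
  assumes prob_space_M: "prob_space M" and kernel: "T \<in> M \<rightarrow>\<^sub>M prob_algebra M"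
    and invariant: "bind M T = M"
begin

lemma kernel_subprob: "T \<in> M \<rightarrow>\<^sub>M subprob_algebra M"
  using measurable_prob_algebraD[OF kernel] .

lemma prob_space_kernel: "x \<in> space M \<Longrightarrow> prob_space (T x)"
  using measurable_space[OF kernel] by (auto simp: space_prob_algebra)

lemma sets_kernel: "x \<in> space M \<Longrightarrow> sets (T x) = sets M"
  using measurable_space[OF kernel] by (auto simp: space_prob_algebra)

lemma space_kernel: "x \<in> space M \<Longrightarrow> space (T x) = space M"
  using sets_kernel by (rule sets_eq_imp_space_eq)

lemma space_M_ne: "space M \<noteq> {}"
  using prob_space.not_empty[OF prob_space_M] .

lemma nn_integral_kernel_invariant:
  assumes "g \<in> borel_measurable M"
  shows "(\<integral>\<^sup>+x. \<integral>\<^sup>+y. g y \<partial>T x \<partial>M) = (\<integral>\<^sup>+x. g x \<partial>M)"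
  using nn_integral_bind[OF assms kernel_subprob] unfolding invariant by simp

lemma borel_measurable_kernel_integral[measurable]:
  fixes f :: "'a \<Rightarrow> real"
  assumes "f \<in> borel_measurable M"
  shows "(\<lambda>x. \<integral>y. f y \<partial>T x) \<in> borel_measurable M"
  using measurable_compose[OF kernel_subprob integral_measurable_subprob_algebra[OF assms]] by simp

lemma AE_integrable_kernel:
  fixes g :: "'a \<Rightarrow> real"
  shows "integrable M g \<Longrightarrow> AE x in M. integrable (T x) g"
  using AE_integrable_bind[OF kernel space_M_ne, of g] unfolding invariant .

lemma integrable_kernel_integral:
  fixes g :: "'a \<Rightarrow> real"
  shows "integrable M g \<Longrightarrow> integrable M (\<lambda>x. \<integral>y. g y \<partial>T x)"
  using integral_bind_kernel(1)[OF kernel space_M_ne, of g] unfolding invariant .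

lemma integral_kernel_integral:
  fixes g :: "'a \<Rightarrow> real"
  shows "integrable M g \<Longrightarrow> (\<integral>x. (\<integral>y. g y \<partial>T x) \<partial>M) = (\<integral>x. g x \<partial>M)"
  using integral_bind_kernel(2)[OF kernel space_M_ne, of g] unfolding invariant by simp

lemma AE_square_integrable_kernel:
  fixes f :: "'a \<Rightarrow> real"
  assumes f: "f \<in> borel_measurable M" and f2: "integrable M (\<lambda>x. (f x)\<^sup>2)"
  shows "AE x in M. integrable (T x) f \<and> integrable (T x) (\<lambda>y. (f y)\<^sup>2)"
  using AE_integrable_kernel[OF f2]
proof (rule AE_mp, intro AE_I2 impI conjI)
  fix x assume x: "x \<in> space M" and i: "integrable (T x) (\<lambda>y. (f y)\<^sup>2)"
  have "f \<in> borel_measurable (T x)" using f sets_kernel[OF x] by (simp cong: measurable_cong_sets)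
  then show "integrable (T x) f" by (rule integrable_of_square_integrable[OF prob_space_kernel[OF x] _ i])
qed

lemma
  fixes f :: "'a \<Rightarrow> real"
  assumes f: "f \<in> borel_measurable M" and f2: "integrable M (\<lambda>x. (f x)\<^sup>2)"
  shows integrable_kernel_square: "integrable M (\<lambda>x. (\<integral>y. f y \<partial>T x)\<^sup>2)"
    and kernel_square_integral_le: "(\<integral>x. (\<integral>y. f y \<partial>T x)\<^sup>2 \<partial>M) \<le> (\<integral>x. (f x)\<^sup>2 \<partial>M)"
proof -
  note ih = integrable_kernel_integral[OF f2]
  have ae: "AE x in M. (\<integral>y. f y \<partial>T x)\<^sup>2 \<le> (\<integral>y. (f y)\<^sup>2 \<partial>T x)"
    using AE_square_integrable_kernel[OF f f2]
  proof (rule AE_mp, intro AE_I2 impI)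
    fix x assume "x \<in> space M" "integrable (T x) f \<and> integrable (T x) (\<lambda>y. (f y)\<^sup>2)"
    then show "(\<integral>y. f y \<partial>T x)\<^sup>2 \<le> (\<integral>y. (f y)\<^sup>2 \<partial>T x)"
      using square_integral_le_integral_square[OF prob_space_kernel, of x f] by simp
  qed
  show i: "integrable M (\<lambda>x. (\<integral>y. f y \<partial>T x)\<^sup>2)"
  proof (rule Bochner_Integration.integrable_bound[OF ih])
    show "(\<lambda>x. (\<integral>y. f y \<partial>T x)\<^sup>2) \<in> borel_measurable M" using f by measurable
    show "AE x in M. norm ((\<integral>y. f y \<partial>T x)\<^sup>2) \<le> norm (\<integral>y. (f y)\<^sup>2 \<partial>T x)"
      using ae by eventually_elim auto
  qed
  have "(\<integral>x. (\<integral>y. f y \<partial>T x)\<^sup>2 \<partial>M) \<le> (\<integral>x. (\<integral>y. (f y)\<^sup>2 \<partial>T x) \<partial>M)"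
    by (rule integral_mono_AE[OF i ih ae])
  then show "(\<integral>x. (\<integral>y. f y \<partial>T x)\<^sup>2 \<partial>M) \<le> (\<integral>x. (f x)\<^sup>2 \<partial>M)"
    using integral_kernel_integral[OF f2] by simp
qed

lemma nn_integral_kernel_abs_mult_finite:
  fixes g :: "'a \<Rightarrow> real"
  assumes g: "g \<in> borel_measurable M" and g2: "integrable M (\<lambda>x. (g x)\<^sup>2)"
  shows "(\<integral>\<^sup>+x. ennreal \<bar>\<integral>y. g y \<partial>T x\<bar> * (\<integral>\<^sup>+y. ennreal \<bar>g y\<bar> \<partial>T x) \<partial>M) < \<infinity>"
proof -
  define G where "G x = (\<integral>y. g y \<partial>T x)" for x
  define H where "H x = (\<integral>y. \<bar>g y\<bar> \<partial>T x)" for x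
  define B where "B x = ((G x)\<^sup>2 + (\<integral>y. (g y)\<^sup>2 \<partial>T x)) / 2" for x
  have "AE x in M. ennreal \<bar>G x\<bar> * (\<integral>\<^sup>+y. ennreal \<bar>g y\<bar> \<partial>T x) \<le> ennreal (B x)"
    using AE_square_integrable_kernel[OF g g2]
  proof (rule AE_mp, intro AE_I2 impI)
    fix x assume x: "x \<in> space M" and i: "integrable (T x) g \<and> integrable (T x) (\<lambda>y. (g y)\<^sup>2)"
    have H_eq: "(\<integral>\<^sup>+y. ennreal \<bar>g y\<bar> \<partial>T x) = ennreal (H x)"
      unfolding H_def by (rule nn_integral_eq_integral) (use i in auto)
    have "(H x)\<^sup>2 \<le> (\<integral>y. (g y)\<^sup>2 \<partial>T x)"
      unfolding H_def using square_integral_le_integral_square[OF prob_space_kernel[OF x], of "\<lambda>y. \<bar>g y\<bar>"] i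
      by simp
    moreover have "\<bar>G x * H x\<bar> \<le> ((G x)\<^sup>2 + (H x)\<^sup>2) / 2" by (rule abs_mult_le_amgm)
    moreover have "0 \<le> H x" unfolding H_def by simp
    ultimately show "ennreal \<bar>G x\<bar> * (\<integral>\<^sup>+y. ennreal \<bar>g y\<bar> \<partial>T x) \<le> ennreal (B x)"
      unfolding H_eq B_def by (simp add: ennreal_mult[symmetric] abs_mult ennreal_leI)
  qed
  then have "(\<integral>\<^sup>+x. ennreal \<bar>G x\<bar> * (\<integral>\<^sup>+y. ennreal \<bar>g y\<bar> \<partial>T x) \<partial>M) \<le> (\<integral>\<^sup>+x. ennreal (B x) \<partial>M)"
    by (rule nn_integral_mono_AE)
  also have "\<dots> < \<infinity>"
  proof -
    have "integrable M B"
      unfolding B_def G_def using integrable_kernel_square[OF g g2] integrable_kernel_integral[OF g2] by simp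
    then show ?thesis by (simp add: integrable_iff_bounded less_top[symmetric] nn_integral_eq_integral B_def)
  qed
  finally show ?thesis unfolding G_def .
qed

lemma integral_kernel_square_diff:
  fixes f g :: "'a \<Rightarrow> real"
  assumes f: "f \<in> borel_measurable M" and f2: "integrable M (\<lambda>x. (f x)\<^sup>2)"
    and g: "g \<in> borel_measurable M" and g2: "integrable M (\<lambda>x. (g x)\<^sup>2)"
  shows "(\<integral>x. (\<integral>y. f y - c * g y \<partial>T x)\<^sup>2 \<partial>M)
    = (\<integral>x. (\<integral>y. f y \<partial>T x)\<^sup>2 \<partial>M) - 2 * c * (\<integral>x. (\<integral>y. f y \<partial>T x) * (\<integral>y. g y \<partial>T x) \<partial>M)
      + c\<^sup>2 * (\<integral>x. (\<integral>y. g y \<partial>T x)\<^sup>2 \<partial>M)"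
proof -
  note Tf = borel_measurable_kernel_integral[OF f] and Tg = borel_measurable_kernel_integral[OF g]
  note Tf2 = integrable_kernel_square[OF f f2] and Tg2 = integrable_kernel_square[OF g g2]
  have ae: "AE x in M. (\<integral>y. f y - c * g y \<partial>T x) = (\<integral>y. f y \<partial>T x) - c * (\<integral>y. g y \<partial>T x)"
    using AE_square_integrable_kernel[OF f f2] AE_square_integrable_kernel[OF g g2] by eventually_elim simp
  have "(\<integral>x. (\<integral>y. f y - c * g y \<partial>T x)\<^sup>2 \<partial>M) = (\<integral>x. ((\<integral>y. f y \<partial>T x) - c * (\<integral>y. g y \<partial>T x))\<^sup>2 \<partial>M)"
  proof (rule integral_cong_AE)
    show "(\<lambda>x. (\<integral>y. f y - c * g y \<partial>T x)\<^sup>2) \<in> borel_measurable M"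
      using borel_measurable_kernel_integral[of "\<lambda>y. f y - c * g y"] f g by measurable
    show "(\<lambda>x. ((\<integral>y. f y \<partial>T x) - c * (\<integral>y. g y \<partial>T x))\<^sup>2) \<in> borel_measurable M"
      using Tf Tg by measurable
  qed (use ae in auto)
  also have "\<dots> = (\<integral>x. (\<integral>y. f y \<partial>T x)\<^sup>2 - 2 * c * ((\<integral>y. f y \<partial>T x) * (\<integral>y. g y \<partial>T x))
      + c\<^sup>2 * (\<integral>y. g y \<partial>T x)\<^sup>2 \<partial>M)"
    by (simp add: power2_diff power_mult_distrib algebra_simps)
  also have "\<dots> = (\<integral>x. (\<integral>y. f y \<partial>T x)\<^sup>2 \<partial>M) - 2 * c * (\<integral>x. (\<integral>y. f y \<partial>T x) * (\<integral>y. g y \<partial>T x) \<partial>M)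
      + c\<^sup>2 * (\<integral>x. (\<integral>y. g y \<partial>T x)\<^sup>2 \<partial>M)"
    using Tf2 Tg2 integrable_mult_of_square_integrable[OF Tf Tg Tf2 Tg2] by simp
  finally show ?thesis .
qed

definition opnorm_set :: "real set" where
  "opnorm_set = {sqrt (\<integral>x. (\<integral>y. f y \<partial>T x)\<^sup>2 \<partial>M) | f.
       f \<in> borel_measurable M \<and> integrable M (\<lambda>x. (f x)\<^sup>2) \<and>
       (\<integral>x. f x \<partial>M) = 0 \<and> (\<integral>x. (f x)\<^sup>2 \<partial>M) \<le> 1}"

lemma opnorm_eq_Sup: "opnorm M T = Sup opnorm_set"
  unfolding opnorm_def opnorm_set_def ..

lemma opnorm_set_le_1: "v \<in> opnorm_set \<Longrightarrow> v \<le> 1"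
proof -
  assume "v \<in> opnorm_set"
  then obtain f :: "'a \<Rightarrow> real" where f: "f \<in> borel_measurable M" "integrable M (\<lambda>x. (f x)\<^sup>2)"
    "(\<integral>x. (f x)\<^sup>2 \<partial>M) \<le> 1" and v: "v = sqrt (\<integral>x. (\<integral>y. f y \<partial>T x)\<^sup>2 \<partial>M)"
    unfolding opnorm_set_def by blast
  have "(\<integral>x. (\<integral>y. f y \<partial>T x)\<^sup>2 \<partial>M) \<le> 1" using kernel_square_integral_le[OF f(1,2)] f(3) by linarith
  then show "v \<le> 1" unfolding v by simp
qed

lemma zero_in_opnorm_set: "0 \<in> opnorm_set"
  unfolding opnorm_set_def by (rule CollectI, rule exI[of _ "\<lambda>_. 0"]) simp

lemma bdd_above_opnorm_set: "bdd_above opnorm_set"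
  using opnorm_set_le_1 by (rule bdd_aboveI)

lemma opnorm_nonneg: "0 \<le> opnorm M T"
  unfolding opnorm_eq_Sup using zero_in_opnorm_set bdd_above_opnorm_set by (rule cSup_upper)

lemma opnorm_le_1: "opnorm M T \<le> 1"
  unfolding opnorm_eq_Sup using zero_in_opnorm_set opnorm_set_le_1 by (intro cSup_least) auto

lemma kernel_square_integral_le_opnorm:
  fixes f :: "'a \<Rightarrow> real"
  assumes f: "f \<in> borel_measurable M" and f2: "integrable M (\<lambda>x. (f x)\<^sup>2)"
    and f0: "(\<integral>x. f x \<partial>M) = 0"
  shows "(\<integral>x. (\<integral>y. f y \<partial>T x)\<^sup>2 \<partial>M) \<le> (opnorm M T)\<^sup>2 * (\<integral>x. (f x)\<^sup>2 \<partial>M)"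
proof (cases "(\<integral>x. (f x)\<^sup>2 \<partial>M) = 0")
  case True
  then show ?thesis using kernel_square_integral_le[OF f f2] by simp
next
  case False
  define n where "n = (\<integral>x. (f x)\<^sup>2 \<partial>M)"
  have n: "0 < n" using False unfolding n_def by (simp add: order_less_le)
  define g where "g x = f x / sqrt n" for x
  have g2: "(\<lambda>x. (g x)\<^sup>2) = (\<lambda>x. (f x)\<^sup>2 / n)" using n by (auto simp: g_def fun_eq_iff power_divide)
  have Tg2: "(\<lambda>x. (\<integral>y. g y \<partial>T x)\<^sup>2) = (\<lambda>x. (\<integral>y. f y \<partial>T x)\<^sup>2 / n)"
    using n by (auto simp: g_def fun_eq_iff power_divide)
  have "g \<in> borel_measurable M" unfolding g_def using f by measurable
  moreover have "integrable M (\<lambda>x. (g x)\<^sup>2)" unfolding g2 using f2 by simp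
  moreover have "(\<integral>x. g x \<partial>M) = 0" unfolding g_def using f0 by simp
  moreover have "(\<integral>x. (g x)\<^sup>2 \<partial>M) \<le> 1" unfolding g2 using n by (simp add: n_def)
  ultimately have "sqrt (\<integral>x. (\<integral>y. g y \<partial>T x)\<^sup>2 \<partial>M) \<in> opnorm_set"
    unfolding opnorm_set_def by blast
  then have "sqrt (\<integral>x. (\<integral>y. g y \<partial>T x)\<^sup>2 \<partial>M) \<le> opnorm M T"
    unfolding opnorm_eq_Sup using bdd_above_opnorm_set by (rule cSup_upper)
  then have "(\<integral>x. (\<integral>y. g y \<partial>T x)\<^sup>2 \<partial>M) \<le> (opnorm M T)\<^sup>2" by (rule sqrt_le_D)
  then have "(\<integral>x. (\<integral>y. f y \<partial>T x)\<^sup>2 \<partial>M) / n \<le> (opnorm M T)\<^sup>2" unfolding Tg2 by simp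
  then show ?thesis using n by (simp add: n_def[symmetric] divide_le_eq mult.commute)
qed

lemma kernel_square_integral_diff_le_opnorm:
  fixes f g :: "'a \<Rightarrow> real"
  assumes f: "f \<in> borel_measurable M" and f2: "integrable M (\<lambda>x. (f x)\<^sup>2)" and f0: "(\<integral>x. f x \<partial>M) = 0"
    and g: "g \<in> borel_measurable M" and g2: "integrable M (\<lambda>x. (g x)\<^sup>2)" and g0: "(\<integral>x. g x \<partial>M) = 0"
  shows "(\<integral>x. (\<integral>y. f y \<partial>T x)\<^sup>2 \<partial>M) - 2 * c * (\<integral>x. (\<integral>y. f y \<partial>T x) * (\<integral>y. g y \<partial>T x) \<partial>M)
      + c\<^sup>2 * (\<integral>x. (\<integral>y. g y \<partial>T x)\<^sup>2 \<partial>M)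
    \<le> (opnorm M T)\<^sup>2 * ((\<integral>x. (f x)\<^sup>2 \<partial>M) - 2 * c * (\<integral>x. f x * g x \<partial>M) + c\<^sup>2 * (\<integral>x. (g x)\<^sup>2 \<partial>M))"
proof -
  define v where "v x = f x - c * g x" for x
  have v_sq: "(\<lambda>x. (v x)\<^sup>2) = (\<lambda>x. (f x)\<^sup>2 - 2 * c * (f x * g x) + c\<^sup>2 * (g x)\<^sup>2)"
    by (auto simp: fun_eq_iff v_def power2_diff power_mult_distrib algebra_simps)
  note fg = integrable_mult_of_square_integrable[OF f g f2 g2]
  have vm: "v \<in> borel_measurable M" unfolding v_def using f g by measurable
  have v2: "integrable M (\<lambda>x. (v x)\<^sup>2)" unfolding v_sq using f2 fg g2 by simp
  have v0: "(\<integral>x. v x \<partial>M) = 0"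
    using integrable_of_square_integrable[OF prob_space_M f f2] integrable_of_square_integrable[OF prob_space_M g g2]
      f0 g0 by (simp add: v_def)
  have "(\<integral>x. (\<integral>y. v y \<partial>T x)\<^sup>2 \<partial>M) \<le> (opnorm M T)\<^sup>2 * (\<integral>x. (v x)\<^sup>2 \<partial>M)"
    by (rule kernel_square_integral_le_opnorm[OF vm v2 v0])
  then show ?thesis
    unfolding integral_kernel_square_diff[OF f f2 g g2, of c, folded v_def]
    using f2 fg g2 by (simp add: v_sq)
qed

lemma opnorm_approx:
  assumes e: "0 < e"
  obtains f :: "'a \<Rightarrow> real" where "f \<in> borel_measurable M" "integrable M (\<lambda>x. (f x)\<^sup>2)"
    "(\<integral>x. f x \<partial>M) = 0" "(\<integral>x. (f x)\<^sup>2 \<partial>M) \<le> 1"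
    "(opnorm M T)\<^sup>2 - e \<le> (\<integral>x. (\<integral>y. f y \<partial>T x)\<^sup>2 \<partial>M)"
proof -
  define N where "N = opnorm M T"
  have "N - e/2 < Sup opnorm_set" using e by (simp add: opnorm_eq_Sup N_def)
  then obtain v where v: "v \<in> opnorm_set" "N - e/2 < v"
    using zero_in_opnorm_set by (metis less_cSupE empty_iff)
  then obtain f :: "'a \<Rightarrow> real" where f: "f \<in> borel_measurable M" "integrable M (\<lambda>x. (f x)\<^sup>2)"
    "(\<integral>x. f x \<partial>M) = 0" "(\<integral>x. (f x)\<^sup>2 \<partial>M) \<le> 1" and v_eq: "v = sqrt (\<integral>x. (\<integral>y. f y \<partial>T x)\<^sup>2 \<partial>M)"
    unfolding opnorm_set_def by blast
  have "N\<^sup>2 - e \<le> v\<^sup>2"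
  proof (cases "N \<le> e/2")
    case True
    have "N\<^sup>2 \<le> N" using opnorm_nonneg opnorm_le_1 by (simp add: N_def power2_eq_square mult_left_le)
    then show ?thesis using True e zero_le_power2[of v] by linarith
  next
    case False
    then have "(N - e/2)\<^sup>2 \<le> v\<^sup>2" using v(2) by (intro power_mono) auto
    moreover have "(N - e/2)\<^sup>2 = N\<^sup>2 - e * N + e\<^sup>2 / 4"
      by (simp add: power2_diff power_divide algebra_simps)
    moreover have "e * N \<le> e" using opnorm_le_1 e by (simp add: N_def mult_left_le)
    ultimately show ?thesis using zero_le_power2[of e] by linarith
  qed
  also have "v\<^sup>2 = (\<integral>x. (\<integral>y. f y \<partial>T x)\<^sup>2 \<partial>M)" using v_eq by simp
  finally show ?thesis by (rule that[OF f, folded N_def])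
qed

lemma borel_measurable_kernel_variance:
  fixes f :: "'a \<Rightarrow> real"
  assumes f: "f \<in> borel_measurable M"
  shows "kernel_variance T f \<in> borel_measurable M"
proof -
  have "(\<lambda>(x, y). ennreal ((f y - (\<integral>y. f y \<partial>T x))\<^sup>2)) \<in> borel_measurable (M \<Otimes>\<^sub>M M)"
    using f borel_measurable_kernel_integral[OF f] by measurable
  from nn_integral_measurable_subprob_algebra2[OF this kernel_subprob]
  show ?thesis unfolding kernel_variance_def by simp
qed

lemma nn_integral_kernel_variance:
  fixes f :: "'a \<Rightarrow> real"
  assumes f: "f \<in> borel_measurable M" and f2: "integrable M (\<lambda>x. (f x)\<^sup>2)"
  shows "(\<integral>\<^sup>+x. kernel_variance T f x \<partial>M)
         = ennreal ((\<integral>x. (f x)\<^sup>2 \<partial>M) - (\<integral>x. (\<integral>y. f y \<partial>T x)\<^sup>2 \<partial>M))"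
proof -
  note ih = integrable_kernel_integral[OF f2] and i = integrable_kernel_square[OF f f2]
  have ae: "AE x in M. (\<integral>\<^sup>+y. ennreal ((f y - (\<integral>y. f y \<partial>T x))\<^sup>2) \<partial>T x)
     = ennreal ((\<integral>y. (f y)\<^sup>2 \<partial>T x) - (\<integral>y. f y \<partial>T x)\<^sup>2)
     \<and> (\<integral>y. f y \<partial>T x)\<^sup>2 \<le> (\<integral>y. (f y)\<^sup>2 \<partial>T x)"
    using AE_square_integrable_kernel[OF f f2]
  proof (rule AE_mp, intro AE_I2 impI)
    fix x assume x: "x \<in> space M" and i: "integrable (T x) f \<and> integrable (T x) (\<lambda>y. (f y)\<^sup>2)"
    interpret p: prob_space "T x" using prob_space_kernel[OF x] .
    have "integrable (T x) (\<lambda>y. (f y - (\<integral>y. f y \<partial>T x))\<^sup>2)" using i by (simp add: power2_diff)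
    then show "(\<integral>\<^sup>+y. ennreal ((f y - (\<integral>y. f y \<partial>T x))\<^sup>2) \<partial>T x)
     = ennreal ((\<integral>y. (f y)\<^sup>2 \<partial>T x) - (\<integral>y. f y \<partial>T x)\<^sup>2)
     \<and> (\<integral>y. f y \<partial>T x)\<^sup>2 \<le> (\<integral>y. (f y)\<^sup>2 \<partial>T x)"
      using p.variance_eq[of f] i square_integral_le_integral_square[OF prob_space_kernel[OF x]]
      by (simp add: nn_integral_eq_integral)
  qed
  have "(\<integral>\<^sup>+x. (\<integral>\<^sup>+y. ennreal ((f y - (\<integral>y. f y \<partial>T x))\<^sup>2) \<partial>T x) \<partial>M)
      = (\<integral>\<^sup>+x. ennreal ((\<integral>y. (f y)\<^sup>2 \<partial>T x) - (\<integral>y. f y \<partial>T x)\<^sup>2) \<partial>M)"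
    by (rule nn_integral_cong_AE) (use ae in auto)
  also have "\<dots> = ennreal (\<integral>x. (\<integral>y. (f y)\<^sup>2 \<partial>T x) - (\<integral>y. f y \<partial>T x)\<^sup>2 \<partial>M)"
    by (rule nn_integral_eq_integral) (use ih i ae in auto)
  also have "\<dots> = ennreal ((\<integral>x. (f x)\<^sup>2 \<partial>M) - (\<integral>x. (\<integral>y. f y \<partial>T x)\<^sup>2 \<partial>M))"
    using ih i integral_kernel_integral[OF f2] by simp
  finally show ?thesis unfolding kernel_variance_def .
qed

lemma kernel_square_integral_le_opnorm_variance:
  fixes f :: "'a \<Rightarrow> real"
  assumes f: "f \<in> borel_measurable M" and f2: "integrable M (\<lambda>x. (f x)\<^sup>2)"
  shows "(\<integral>x. (\<integral>y. f y \<partial>T x)\<^sup>2 \<partial>M) \<le>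
     (opnorm M T)\<^sup>2 * ((\<integral>x. (f x)\<^sup>2 \<partial>M) - (\<integral>x. f x \<partial>M)\<^sup>2) + (\<integral>x. f x \<partial>M)\<^sup>2"
proof -
  interpret p: prob_space M using prob_space_M .
  define m where "m = (\<integral>x. f x \<partial>M)"
  define h where "h x = f x - m" for x
  have fi: "integrable M f" by (rule integrable_of_square_integrable[OF prob_space_M f f2])
  have hm: "h \<in> borel_measurable M" unfolding h_def using f by measurable
  have h2: "integrable M (\<lambda>x. (h x)\<^sup>2)" unfolding h_def using f2 fi by (simp add: power2_diff)
  have hi: "integrable M h" unfolding h_def using fi by simp
  have h0: "(\<integral>x. h x \<partial>M) = 0" unfolding h_def using fi by (simp add: m_def p.prob_space)
  have hsq: "(\<integral>x. (h x)\<^sup>2 \<partial>M) = (\<integral>x. (f x)\<^sup>2 \<partial>M) - m\<^sup>2"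
    unfolding h_def m_def using p.variance_eq[of f] fi f2 by simp
  have ae: "AE x in M. (\<integral>y. f y \<partial>T x) = (\<integral>y. h y \<partial>T x) + m"
    using AE_integrable_kernel[OF fi]
  proof (rule AE_mp, intro AE_I2 impI)
    fix x assume x: "x \<in> space M" and fx: "integrable (T x) f"
    interpret q: prob_space "T x" using prob_space_kernel[OF x] .
    have "(\<integral>y. h y \<partial>T x) = (\<integral>y. f y \<partial>T x) - (\<integral>y. m \<partial>T x)"
      unfolding h_def by (rule Bochner_Integration.integral_diff[OF fx q.integrable_const])
    then show "(\<integral>y. f y \<partial>T x) = (\<integral>y. h y \<partial>T x) + m" by (simp add: q.prob_space)
  qed
  have "(\<integral>x. (\<integral>y. f y \<partial>T x)\<^sup>2 \<partial>M) = (\<integral>x. ((\<integral>y. h y \<partial>T x) + m)\<^sup>2 \<partial>M)"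
  proof (rule integral_cong_AE)
    show "(\<lambda>x. (\<integral>y. f y \<partial>T x)\<^sup>2) \<in> borel_measurable M" using f by measurable
    show "(\<lambda>x. ((\<integral>y. h y \<partial>T x) + m)\<^sup>2) \<in> borel_measurable M" using hm by measurable
  qed (use ae in auto)
  also have "\<dots> = (\<integral>x. (\<integral>y. h y \<partial>T x)\<^sup>2 \<partial>M) + 2 * m * (\<integral>x. (\<integral>y. h y \<partial>T x) \<partial>M) + m\<^sup>2"
    using integrable_kernel_square[OF hm h2] integrable_kernel_integral[OF hi]
    by (simp add: power2_sum p.prob_space algebra_simps)
  also have "\<dots> = (\<integral>x. (\<integral>y. h y \<partial>T x)\<^sup>2 \<partial>M) + m\<^sup>2"
    using integral_kernel_integral[OF hi] h0 by simp
  also have "\<dots> \<le> (opnorm M T)\<^sup>2 * (\<integral>x. (h x)\<^sup>2 \<partial>M) + m\<^sup>2"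
    using kernel_square_integral_le_opnorm[OF hm h2 h0] by simp
  finally show ?thesis using hsq by (simp add: m_def)
qed

lemma kpow_kernel: "kpow M T n \<in> M \<rightarrow>\<^sub>M prob_algebra M"
  by (induction n) (simp_all add: measurable_bind_prob_space[OF kernel])

lemma kpow_invariant: "bind M (kpow M T n) = M"
proof (induction n)
  case (Suc n)
  have "bind M (kpow M T (Suc n)) = bind (bind M T) (kpow M T n)"
    by (simp add: bind_assoc[OF kernel_subprob measurable_prob_algebraD[OF kpow_kernel]])
  then show ?case using invariant Suc by simp
qed (simp add: bind_return')

lemma kpow_Suc_right: "x \<in> space M \<Longrightarrow> kpow M T (Suc n) x = bind (kpow M T n x) T"
proof (induction n arbitrary: x)
  case 0
  have "kpow M T (Suc 0) x = T x" by (simp add: bind_return''[OF sets_kernel[OF 0]])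
  also have "\<dots> = bind (return M x) T" by (rule bind_return[OF kernel_subprob 0, symmetric])
  finally show ?case by simp
next
  case (Suc n)
  have "kpow M T n \<in> T x \<rightarrow>\<^sub>M subprob_algebra M"
    using measurable_prob_algebraD[OF kpow_kernel] sets_kernel[OF Suc.prems]
    by (simp cong: measurable_cong_sets)
  then have "bind (T x) (\<lambda>y. bind (kpow M T n y) T) = bind (bind (T x) (kpow M T n)) T"
    by (rule bind_assoc[symmetric, OF _ kernel_subprob])
  moreover have "bind (T x) (kpow M T (Suc n)) = bind (T x) (\<lambda>y. bind (kpow M T n y) T)"
    by (rule bind_cong[OF refl]) (use Suc.IH space_kernel[OF Suc.prems] in auto)
  ultimately show ?case by simp
qed

lemma invariant_kernel_kpow: "invariant_kernel M (kpow M T n)"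
  by (intro invariant_kernel.intro prob_space_M kpow_kernel kpow_invariant)

end

section \<open>The disjoint union of the blocks\<close>

locale block_space =
  fixes K :: "'k set" and Psi :: "'k \<Rightarrow> 'z measure"
  assumes K: "countable K" "K \<noteq> {}"
    and Psi_pos: "\<And>k. k \<in> K \<Longrightarrow> emeasure (Psi k) (space (Psi k)) \<noteq> 0"
    and Psi_fin: "\<And>k. k \<in> K \<Longrightarrow> emeasure (Psi k) (space (Psi k)) < \<infinity>"
    and tot_fin: "total_mass K Psi < \<infinity>"
begin

abbreviation "PX \<equiv> PiX K Psi"
definition "mass = total_mass K Psi"
definition "block_mass k = emeasure (Psi k) (space (Psi k))"

lemma space_Psi_ne: "k \<in> K \<Longrightarrow> space (Psi k) \<noteq> {}"
  using Psi_pos by force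

lemma Xgen_subset: "Xgen K Psi \<subseteq> Pow (Xspace K Psi)"
  unfolding Xgen_def Xspace_def using sets.sets_into_space by fastforce

lemma sets_PX: "sets PX = sigma_sets (Xspace K Psi) (Xgen K Psi)"
  unfolding PiX_def using Xgen_subset by (rule sets_measure_of)

lemma space_PX: "space PX = Xspace K Psi"
  unfolding PiX_def using Xgen_subset by (rule space_measure_of)

lemma rect_in_sets_PX: "k \<in> K \<Longrightarrow> A \<in> sets (Psi k) \<Longrightarrow> {k} \<times> A \<in> sets PX"
  unfolding sets_PX Xgen_def by (rule sigma_sets.Basic) blast

lemma block_in_sets_PX: "k \<in> K \<Longrightarrow> {k} \<times> space (Psi k) \<in> sets PX"
  by (rule rect_in_sets_PX) auto

lemma measurable_Pair_block[measurable]: "k \<in> K \<Longrightarrow> Pair k \<in> Psi k \<rightarrow>\<^sub>M PX"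
  unfolding PiX_def
proof (rule measurable_measure_of[OF Xgen_subset])
  assume k: "k \<in> K"
  show "Pair k \<in> space (Psi k) \<rightarrow> Xspace K Psi" using k by (auto simp: Xspace_def)
  fix y assume "y \<in> Xgen K Psi"
  then obtain k' A where y: "y = {k'} \<times> A" "k' \<in> K" "A \<in> sets (Psi k')" unfolding Xgen_def by blast
  show "Pair k -` y \<inter> space (Psi k) \<in> sets (Psi k)"
  proof (cases "k' = k")
    case True
    then have "Pair k -` y \<inter> space (Psi k) = A" using y sets.sets_into_space by auto
    then show ?thesis using y True by simp
  next
    case False
    then have "Pair k -` y \<inter> space (Psi k) = {}" using y by auto
    then show ?thesis by simp
  qed
qed

lemma measurable_fst_PX[measurable]: "fst \<in> PX \<rightarrow>\<^sub>M count_space K"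
  unfolding measurable_def
proof (intro CollectI conjI ballI)
  show "fst \<in> space PX \<rightarrow> space (count_space K)" by (auto simp: space_PX Xspace_def)
  fix S assume "S \<in> sets (count_space K)"
  then have S: "S \<subseteq> K" by simp
  have "fst -` S \<inter> space PX = (\<Union>k\<in>S. {k} \<times> space (Psi k))" using S by (auto simp: space_PX Xspace_def)
  also have "\<dots> \<in> sets PX"
    using S countable_subset[OF S K(1)] by (intro sets.countable_UN') (auto intro!: block_in_sets_PX)
  finally show "fst -` S \<inter> space PX \<in> sets PX" .
qed

lemma Xspace_in_sets_PX: "Xspace K Psi \<in> sets PX" using sets.top[of PX] space_PX by simp

lemma measurable_section[measurable]: "k \<in> K \<Longrightarrow> f \<in> borel_measurable PX \<Longrightarrow> (\<lambda>z. f (k, z)) \<in> borel_measurable (Psi k)"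
  using measurable_compose[OF measurable_Pair_block] by blast

lemma Pair_vimage_Xspace: "k \<in> K \<Longrightarrow> Pair k -` Xspace K Psi \<inter> space (Psi k) = space (Psi k)"
  by (auto simp: Xspace_def)

lemma measurable_Pair_block_scaled: "k \<in> K \<Longrightarrow> Pair k \<in> scale_measure r (Psi k) \<rightarrow>\<^sub>M PX"
  using measurable_Pair_block by (simp cong: measurable_cong_sets)

lemma block_mass_le_mass: "k \<in> K \<Longrightarrow> block_mass k \<le> mass"
  unfolding mass_def total_mass_def block_mass_def by (rule nn_integral_count_space_ge)

lemma mass_nonzero: "mass \<noteq> 0"
proof -
  obtain k where "k \<in> K" using K(2) by blast
  then show ?thesis using block_mass_le_mass Psi_pos by (auto simp: block_mass_def)
qed

lemma mass_finite: "mass < \<infinity>" using tot_fin by (simp add: mass_def)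

definition "block_measure k = distr (scale_measure (inverse mass) (Psi k)) PX (Pair k)"

lemma block_measure_kernel: "block_measure \<in> count_space K \<rightarrow>\<^sub>M subprob_algebra PX"
proof (rule measurable_count_space_eq1[THEN iffD2], rule Pi_I)
  fix k assume k: "k \<in> K"
  have sets: "sets (block_measure k) = sets PX" by (simp add: block_measure_def)
  have "emeasure (block_measure k) (space (block_measure k)) = inverse mass * block_mass k"
    using k by (simp add: block_measure_def emeasure_distr[OF measurable_Pair_block_scaled] block_mass_def space_PX Pair_vimage_Xspace Xspace_in_sets_PX space_scale_measure)
  also have "\<dots> \<le> inverse mass * mass" using block_mass_le_mass[OF k] by (intro mult_left_mono) auto
  also have "\<dots> = 1" using mass_nonzero mass_finite by (simp add: ennreal_inverse_mult_self)
  finally have "subprob_space (block_measure k)"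
    using space_Psi_ne[OF k] k by (intro subprob_spaceI) (auto simp: block_measure_def space_PX Xspace_def)
  then show "block_measure k \<in> space (subprob_algebra PX)" using sets by (simp add: space_subprob_algebra)
qed

text \<open>Presenting the measure \<^term>\<open>PX\<close> as a mixture of the rescaled blocks gives its countable additivity for free.\<close>
definition "mixture = bind (count_space K) block_measure"

lemma emeasure_mixture: "B \<in> sets PX \<Longrightarrow> emeasure mixture B =
  (\<integral>\<^sup>+ k. emeasure (Psi k) (Pair k -` B \<inter> space (Psi k)) \<partial>count_space K) / mass"
proof -
  assume B: "B \<in> sets PX"
  have "emeasure mixture B = (\<integral>\<^sup>+ k. emeasure (block_measure k) B \<partial>count_space K)"
    unfolding mixture_def using K(2) by (intro emeasure_bind[OF _ block_measure_kernel B]) auto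
  also have "\<dots> = (\<integral>\<^sup>+ k. inverse mass * emeasure (Psi k) (Pair k -` B \<inter> space (Psi k)) \<partial>count_space K)"
    by (intro nn_integral_cong) (simp add: block_measure_def emeasure_distr[OF measurable_Pair_block_scaled] B space_scale_measure)
  also have "\<dots> = inverse mass * (\<integral>\<^sup>+ k. emeasure (Psi k) (Pair k -` B \<inter> space (Psi k)) \<partial>count_space K)"
    by (rule nn_integral_cmult) simp
  finally show ?thesis by (simp add: divide_ennreal_def mult.commute)
qed

lemma sets_mixture: "sets mixture = sets PX"
  unfolding mixture_def using K(2) by (intro sets_bind) (auto simp: block_measure_def)

lemma space_mixture: "space mixture = space PX"
  using sets_mixture by (rule sets_eq_imp_space_eq)

lemma PX_eq_mixture: "PX = mixture"
proof -
  have "PX = measure_of (Xspace K Psi) (Xgen K Psi) (emeasure mixture)"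
    unfolding PiX_def
  proof (rule measure_of_eq[OF Xgen_subset])
    fix a assume "a \<in> sigma_sets (Xspace K Psi) (Xgen K Psi)"
    then have "a \<in> sets PX" by (simp add: sets_PX)
    then show "(\<integral>\<^sup>+ k. emeasure (Psi k) (Pair k -` a \<inter> space (Psi k)) \<partial>count_space K) / total_mass K Psi
          = emeasure mixture a" by (simp add: emeasure_mixture mass_def)
  qed
  also have "\<dots> = measure_of (space mixture) (sets mixture) (emeasure mixture)"
    using measure_of_sigma_sets[OF Xgen_subset] by (simp add: space_mixture sets_mixture sets_PX space_PX)
  also have "\<dots> = mixture" by (rule measure_of_of_measure)
  finally show ?thesis .
qed

lemma nn_integral_PX_mass:
  assumes f: "f \<in> borel_measurable PX"
  shows "(\<integral>\<^sup>+x. f x \<partial>PX) = (\<integral>\<^sup>+k. inverse mass * (\<integral>\<^sup>+z. f (k, z) \<partial>Psi k) \<partial>count_space K)"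
proof -
  have "(\<integral>\<^sup>+x. f x \<partial>PX) = (\<integral>\<^sup>+x. f x \<partial>mixture)" using PX_eq_mixture by simp
  also have "\<dots> = (\<integral>\<^sup>+k. \<integral>\<^sup>+x. f x \<partial>block_measure k \<partial>count_space K)"
    unfolding mixture_def by (rule nn_integral_bind[OF f block_measure_kernel])
  also have "\<dots> = (\<integral>\<^sup>+k. inverse mass * (\<integral>\<^sup>+z. f (k, z) \<partial>Psi k) \<partial>count_space K)"
  proof (rule nn_integral_cong)
    fix k assume "k \<in> space (count_space K)"
    then have k: "k \<in> K" by simp
    have "(\<integral>\<^sup>+x. f x \<partial>block_measure k) = (\<integral>\<^sup>+z. f (k, z) \<partial>scale_measure (inverse mass) (Psi k))"
      unfolding block_measure_def using k f by (intro nn_integral_distr) (auto cong: measurable_cong_sets)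
    also have "\<dots> = inverse mass * (\<integral>\<^sup>+z. f (k, z) \<partial>Psi k)"
      using k f by (intro nn_integral_scale_measure) measurable
    finally show "(\<integral>\<^sup>+x. f x \<partial>block_measure k) = inverse mass * (\<integral>\<^sup>+z. f (k, z) \<partial>Psi k)" .
  qed
  finally show ?thesis .
qed

lemma emeasure_PX_block: "k \<in> K \<Longrightarrow> emeasure PX ({k} \<times> space (Psi k)) = block_mass k / mass"
proof -
  assume k: "k \<in> K"
  have "emeasure PX ({k} \<times> space (Psi k)) = emeasure mixture ({k} \<times> space (Psi k))" using PX_eq_mixture by simp
  also have "\<dots> = (\<integral>\<^sup>+ k'. block_mass k * indicator {k} k' \<partial>count_space K) / mass"
    using k block_in_sets_PX[OF k]
    by (subst emeasure_mixture) (auto intro!: arg_cong2[where f="(/)"] nn_integral_cong simp: block_mass_def indicator_def)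
  also have "\<dots> = block_mass k / mass" using k by (simp add: nn_integral_count_space_indicator nn_integral_indicator_singleton)
  finally show ?thesis .
qed

lemma prob_space_PX: "prob_space PX"
proof
  have "emeasure PX (space PX) = emeasure mixture (space PX)" using PX_eq_mixture by simp
  also have "\<dots> = (\<integral>\<^sup>+ k. block_mass k \<partial>count_space K) / mass"
    by (subst emeasure_mixture) (auto intro!: arg_cong2[where f="(/)"] nn_integral_cong simp: block_mass_def space_PX Pair_vimage_Xspace Xspace_in_sets_PX)
  also have "\<dots> = 1" using mass_nonzero mass_finite by (simp add: mass_def total_mass_def block_mass_def[abs_def] divide_eq_1_ennreal)
  finally show "emeasure PX (space PX) = 1" .
qed

definition "Phi k = normalise (Psi k)"
definition "weight k = enn2real (block_mass k / mass)"

lemma block_mass_finite: "k \<in> K \<Longrightarrow> block_mass k < \<infinity>" using Psi_fin by (simp add: block_mass_def)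
lemma block_mass_nonzero: "k \<in> K \<Longrightarrow> block_mass k \<noteq> 0" using Psi_pos by (simp add: block_mass_def)

lemma ennreal_weight: "k \<in> K \<Longrightarrow> ennreal (weight k) = block_mass k / mass"
proof -
  assume k: "k \<in> K"
  have "block_mass k / mass \<noteq> \<top>" using block_mass_finite[OF k] mass_nonzero by (auto simp: ennreal_divide_eq_top_iff)
  then show ?thesis by (simp add: weight_def less_top)
qed

lemma weight_pos: "k \<in> K \<Longrightarrow> 0 < weight k"
proof -
  assume k: "k \<in> K"
  have "block_mass k / mass \<noteq> 0" using block_mass_nonzero[OF k] mass_finite by (simp add: ennreal_divide_eq_0_iff)
  moreover have "block_mass k / mass \<noteq> \<top>" using block_mass_finite[OF k] mass_nonzero by (auto simp: ennreal_divide_eq_top_iff)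
  ultimately show ?thesis unfolding weight_def by (simp add: enn2real_positive_iff less_top[symmetric] zero_less_iff_neq_zero)
qed

lemma sets_Phi[simp, measurable_cong]: "sets (Phi k) = sets (Psi k)"
  by (simp add: Phi_def normalise_def)

lemma space_Phi[simp]: "space (Phi k) = space (Psi k)"
  by (simp add: Phi_def normalise_def space_scale_measure)

lemma prob_space_Phi: "k \<in> K \<Longrightarrow> prob_space (Phi k)"
proof
  assume k: "k \<in> K"
  show "emeasure (Phi k) (space (Phi k)) = 1"
    using block_mass_nonzero[OF k] block_mass_finite[OF k]
    by (simp add: Phi_def normalise_def space_scale_measure block_mass_def[symmetric] ennreal_inverse_mult_self)
qed

lemma measure_Phi_space: "k \<in> K \<Longrightarrow> measure (Phi k) (space (Psi k)) = 1"
  using prob_space.prob_space[OF prob_space_Phi] by simp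

lemma nn_integral_Phi: "f \<in> borel_measurable (Psi k) \<Longrightarrow>
  (\<integral>\<^sup>+z. f z \<partial>Phi k) = inverse (block_mass k) * (\<integral>\<^sup>+z. f z \<partial>Psi k)"
  by (simp add: Phi_def normalise_def nn_integral_scale_measure block_mass_def)

lemma nn_integral_PX:
  assumes f: "f \<in> borel_measurable PX"
  shows "(\<integral>\<^sup>+x. f x \<partial>PX) = (\<integral>\<^sup>+k. ennreal (weight k) * (\<integral>\<^sup>+z. f (k, z) \<partial>Phi k) \<partial>count_space K)"
  unfolding nn_integral_PX_mass[OF f]
proof (rule nn_integral_cong)
  fix k assume "k \<in> space (count_space K)"
  then have k: "k \<in> K" by simp
  have "ennreal (weight k) * (\<integral>\<^sup>+z. f (k, z) \<partial>Phi k) = block_mass k / mass * (inverse (block_mass k) * (\<integral>\<^sup>+z. f (k, z) \<partial>Psi k))"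
    using k f by (simp add: ennreal_weight nn_integral_Phi)
  also have "\<dots> = inverse mass * (block_mass k * inverse (block_mass k)) * (\<integral>\<^sup>+z. f (k, z) \<partial>Psi k)"
    by (simp add: divide_ennreal_def ac_simps)
  also have "\<dots> = inverse mass * (\<integral>\<^sup>+z. f (k, z) \<partial>Psi k)"
  proof -
    have "block_mass k * inverse (block_mass k) = 1" using block_mass_nonzero[OF k] block_mass_finite[OF k] ennreal_inverse_mult_self by (simp add: mult.commute)
    then show ?thesis by simp
  qed
  finally show "inverse mass * (\<integral>\<^sup>+z. f (k, z) \<partial>Psi k) = ennreal (weight k) * (\<integral>\<^sup>+z. f (k, z) \<partial>Phi k)" ..
qed

lemma integrable_section:
  fixes F :: "'k \<times> 'z \<Rightarrow> real"
  assumes F: "integrable PX F" and k: "k \<in> K"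
  shows "integrable (Phi k) (\<lambda>z. F (k, z))"
proof -
  have Fm: "F \<in> borel_measurable PX" using F by auto
  have "ennreal (weight k) * (\<integral>\<^sup>+z. ennreal (norm (F (k, z))) \<partial>Phi k)
      \<le> (\<integral>\<^sup>+k. ennreal (weight k) * (\<integral>\<^sup>+z. ennreal (norm (F (k, z))) \<partial>Phi k) \<partial>count_space K)"
    by (rule nn_integral_count_space_ge[OF k])
  also have "\<dots> = (\<integral>\<^sup>+x. ennreal (norm (F x)) \<partial>PX)" by (rule nn_integral_PX[symmetric]) (use Fm in measurable)
  also have "\<dots> < \<infinity>" using F by (simp add: integrable_iff_bounded)
  finally have "(\<integral>\<^sup>+z. ennreal (norm (F (k, z))) \<partial>Phi k) < \<infinity>"
    using weight_pos[OF k] by (auto simp: ennreal_mult_less_top)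
  moreover have "(\<lambda>z. F (k, z)) \<in> borel_measurable (Phi k)" using Fm k by (simp cong: measurable_cong_sets)
  ultimately show ?thesis by (simp add: integrable_iff_bounded)
qed

lemma ennreal_integral_PX_nonneg:
  fixes G :: "'k \<times> 'z \<Rightarrow> real"
  assumes G: "integrable PX G" and nn: "\<And>x. 0 \<le> G x"
  shows "ennreal (\<integral>x. G x \<partial>PX) = (\<integral>\<^sup>+k. ennreal (weight k * (\<integral>z. G (k, z) \<partial>Phi k)) \<partial>count_space K)"
proof -
  have "ennreal (\<integral>x. G x \<partial>PX) = (\<integral>\<^sup>+x. ennreal (G x) \<partial>PX)"
    by (rule nn_integral_eq_integral[symmetric, OF G]) (use nn in auto)
  also have "\<dots> = (\<integral>\<^sup>+k. ennreal (weight k * (\<integral>z. G (k, z) \<partial>Phi k)) \<partial>count_space K)"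
    unfolding nn_integral_PX[OF measurable_compose[OF borel_measurable_integrable[OF G] measurable_ennreal]]
  proof (rule nn_integral_cong)
    fix k assume "k \<in> space (count_space K)"
    then have k: "k \<in> K" by simp
    have "(\<integral>\<^sup>+z. ennreal (G (k, z)) \<partial>Phi k) = ennreal (\<integral>z. G (k, z) \<partial>Phi k)"
      by (rule nn_integral_eq_integral[OF integrable_section[OF G k]]) (use nn in auto)
    moreover have "0 \<le> (\<integral>z. G (k, z) \<partial>Phi k)" by (intro integral_nonneg_AE AE_I2) (use nn in auto)
    ultimately show "ennreal (weight k) * (\<integral>\<^sup>+z. ennreal (G (k, z)) \<partial>Phi k) = ennreal (weight k * (\<integral>z. G (k, z) \<partial>Phi k))"
      using weight_pos[OF k] by (simp add: ennreal_mult)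
  qed
  finally show ?thesis .
qed

lemma integral_PX_nonneg:
  fixes G :: "'k \<times> 'z \<Rightarrow> real"
  assumes G: "integrable PX G" and nn: "\<And>x. 0 \<le> G x"
  shows "integrable (count_space K) (\<lambda>k. weight k * (\<integral>z. G (k, z) \<partial>Phi k))"
    "(\<integral>x. G x \<partial>PX) = (\<integral>k. weight k * (\<integral>z. G (k, z) \<partial>Phi k) \<partial>count_space K)"
proof -
  note eq = ennreal_integral_PX_nonneg[OF G nn]
  have nnk: "\<And>k. 0 \<le> weight k * (\<integral>z. G (k, z) \<partial>Phi k)"
    by (intro mult_nonneg_nonneg integral_nonneg_AE AE_I2) (use nn in \<open>auto simp: weight_def\<close>)
  show i: "integrable (count_space K) (\<lambda>k. weight k * (\<integral>z. G (k, z) \<partial>Phi k))"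
    using eq[symmetric] nnk by (intro integrableI_nonneg) (auto simp: less_top[symmetric])
  have "ennreal (\<integral>x. G x \<partial>PX) = ennreal (\<integral>k. weight k * (\<integral>z. G (k, z) \<partial>Phi k) \<partial>count_space K)"
    unfolding eq using i nnk by (intro nn_integral_eq_integral) auto
  then show "(\<integral>x. G x \<partial>PX) = (\<integral>k. weight k * (\<integral>z. G (k, z) \<partial>Phi k) \<partial>count_space K)"
    using nnk nn by (simp add: integral_nonneg_AE)
qed

lemma integral_PX:
  fixes F :: "'k \<times> 'z \<Rightarrow> real"
  assumes F: "integrable PX F"
  shows "integrable (count_space K) (\<lambda>k. weight k * (\<integral>z. F (k, z) \<partial>Phi k))"
    "(\<integral>x. F x \<partial>PX) = (\<integral>k. weight k * (\<integral>z. F (k, z) \<partial>Phi k) \<partial>count_space K)"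
proof -
  define Fp where "Fp x = max (F x) 0" for x
  define Fn where "Fn x = max (- F x) 0" for x
  have ip: "integrable PX Fp" unfolding Fp_def using F by auto
  have inn: "integrable PX Fn" unfolding Fn_def using F by auto
  have Fe: "F = (\<lambda>x. Fp x - Fn x)" unfolding Fp_def Fn_def by (auto simp: fun_eq_iff)
  note a = integral_PX_nonneg[OF ip] integral_PX_nonneg[OF inn]
  have a1: "integrable (count_space K) (\<lambda>k. weight k * (\<integral>z. Fp (k, z) \<partial>Phi k))" using a(1) by (simp add: Fp_def)
  have a2: "integrable (count_space K) (\<lambda>k. weight k * (\<integral>z. Fn (k, z) \<partial>Phi k))" using a(3) by (simp add: Fn_def)
  have eqk: "weight k * (\<integral>z. F (k, z) \<partial>Phi k) = weight k * (\<integral>z. Fp (k, z) \<partial>Phi k) - weight k * (\<integral>z. Fn (k, z) \<partial>Phi k)"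
    if k: "k \<in> K" for k
  proof -
    have "integrable (Phi k) (\<lambda>z. Fp (k, z))" "integrable (Phi k) (\<lambda>z. Fn (k, z))"
      using integrable_section[OF ip k] integrable_section[OF inn k] .
    then show ?thesis by (subst Fe) (simp add: right_diff_distrib)
  qed
  have ii: "integrable (count_space K) (\<lambda>k. weight k * (\<integral>z. Fp (k, z) \<partial>Phi k) - weight k * (\<integral>z. Fn (k, z) \<partial>Phi k))"
    using a1 a2 by simp
  show "integrable (count_space K) (\<lambda>k. weight k * (\<integral>z. F (k, z) \<partial>Phi k))"
    by (rule Bochner_Integration.integrable_cong[THEN iffD2, OF refl _ ii]) (use eqk in simp)
  have "(\<integral>x. F x \<partial>PX) = (\<integral>x. Fp x \<partial>PX) - (\<integral>x. Fn x \<partial>PX)" using ip inn by (subst Fe) simp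
  also have "\<dots> = (\<integral>k. weight k * (\<integral>z. Fp (k, z) \<partial>Phi k) - weight k * (\<integral>z. Fn (k, z) \<partial>Phi k) \<partial>count_space K)"
    using a a1 a2 by (simp add: Fp_def Fn_def)
  also have "\<dots> = (\<integral>k. weight k * (\<integral>z. F (k, z) \<partial>Phi k) \<partial>count_space K)"
    by (rule Bochner_Integration.integral_cong[OF refl]) (use eqk in simp)
  finally show "(\<integral>x. F x \<partial>PX) = (\<integral>k. weight k * (\<integral>z. F (k, z) \<partial>Phi k) \<partial>count_space K)" .
qed

lemma measurable_PX_glue:
  fixes h :: "'k \<Rightarrow> 'z \<Rightarrow> 'b::topological_space"
  assumes h: "\<And>k. k \<in> K \<Longrightarrow> h k \<in> borel_measurable (Psi k)"
  shows "(\<lambda>x. h (fst x) (snd x)) \<in> borel_measurable PX"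
proof (rule borel_measurableI)
  fix S :: "'b set" assume S: "open S"
  have "(\<lambda>x. h (fst x) (snd x)) -` S \<inter> space PX = (\<Union>k\<in>K. {k} \<times> (h k -` S \<inter> space (Psi k)))"
    by (auto simp: space_PX Xspace_def)
  also have "\<dots> \<in> sets PX"
  proof -
    have hs: "\<And>k. k \<in> K \<Longrightarrow> h k -` S \<inter> space (Psi k) \<in> sets (Psi k)"
      using measurable_sets[OF h borel_open[OF S]] by blast
    show ?thesis using K(1) hs by (intro sets.countable_UN') (auto intro!: rect_in_sets_PX)
  qed
  finally show "(\<lambda>x. h (fst x) (snd x)) -` S \<inter> space PX \<in> sets PX" .
qed

definition "block_mean f k = (\<integral>z. f (k, z) \<partial>Phi k)"
definition "cond_mean f x = block_mean f (fst x)"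

lemma measurable_cond_mean[measurable]: "cond_mean f \<in> borel_measurable PX"
  unfolding cond_mean_def by (rule measurable_compose[OF measurable_fst_PX borel_measurable_count_space])

context
  fixes f :: "'k \<times> 'z \<Rightarrow> real"
  assumes fm: "f \<in> borel_measurable PX" and f2: "integrable PX (\<lambda>x. (f x)\<^sup>2)"
begin

lemma section_square_integrable: "k \<in> K \<Longrightarrow> integrable (Phi k) (\<lambda>z. (f (k, z))\<^sup>2)"
  using integrable_section[OF f2] by simp

lemma section_measurable: "k \<in> K \<Longrightarrow> (\<lambda>z. f (k, z)) \<in> borel_measurable (Phi k)"
  using fm by (simp cong: measurable_cong_sets)

lemma section_integrable: "k \<in> K \<Longrightarrow> integrable (Phi k) (\<lambda>z. f (k, z))"
  using integrable_of_square_integrable[OF prob_space_Phi section_measurable section_square_integrable] .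

lemma integrable_PX_of_square: "integrable PX f"
  using integrable_of_square_integrable[OF prob_space_PX fm f2] .

lemma block_mean_square_le: "k \<in> K \<Longrightarrow> (block_mean f k)\<^sup>2 \<le> (\<integral>z. (f (k, z))\<^sup>2 \<partial>Phi k)"
  unfolding block_mean_def by (rule square_integral_le_integral_square[OF prob_space_Phi section_integrable section_square_integrable])

lemma cond_mean_square_integrable: "integrable PX (\<lambda>x. (cond_mean f x)\<^sup>2)"
proof -
  have [measurable]: "(\<lambda>x. block_mean f (fst x)) \<in> borel_measurable PX"
    by (rule measurable_compose[OF measurable_fst_PX borel_measurable_count_space])
  have "(\<integral>\<^sup>+x. ennreal ((cond_mean f x)\<^sup>2) \<partial>PX) = (\<integral>\<^sup>+k. ennreal (weight k) * (\<integral>\<^sup>+z. ennreal ((block_mean f k)\<^sup>2) \<partial>Phi k) \<partial>count_space K)"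
    by (subst nn_integral_PX) (auto simp: cond_mean_def)
  also have "\<dots> \<le> (\<integral>\<^sup>+k. ennreal (weight k) * (\<integral>\<^sup>+z. ennreal ((f (k, z))\<^sup>2) \<partial>Phi k) \<partial>count_space K)"
  proof (rule nn_integral_mono)
    fix k assume "k \<in> space (count_space K)"
    then have k: "k \<in> K" by simp
    have "(\<integral>\<^sup>+z. ennreal ((block_mean f k)\<^sup>2) \<partial>Phi k) = ennreal ((block_mean f k)\<^sup>2)"
      using prob_space.emeasure_space_1[OF prob_space_Phi[OF k]] by simp
    also have "\<dots> \<le> ennreal (\<integral>z. (f (k, z))\<^sup>2 \<partial>Phi k)" using block_mean_square_le[OF k] by simp
    also have "\<dots> = (\<integral>\<^sup>+z. ennreal ((f (k, z))\<^sup>2) \<partial>Phi k)"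
      by (rule nn_integral_eq_integral[symmetric, OF section_square_integrable[OF k]]) simp
    finally have "(\<integral>\<^sup>+z. ennreal ((block_mean f k)\<^sup>2) \<partial>Phi k) \<le> (\<integral>\<^sup>+z. ennreal ((f (k, z))\<^sup>2) \<partial>Phi k)" .
    then show "ennreal (weight k) * (\<integral>\<^sup>+z. ennreal ((block_mean f k)\<^sup>2) \<partial>Phi k) \<le> ennreal (weight k) * (\<integral>\<^sup>+z. ennreal ((f (k, z))\<^sup>2) \<partial>Phi k)"
      by (rule mult_left_mono) simp
  qed
  also have "\<dots> = (\<integral>\<^sup>+x. ennreal ((f x)\<^sup>2) \<partial>PX)" by (rule nn_integral_PX[symmetric]) (use fm in measurable)
  also have "\<dots> < \<infinity>" using f2 by (simp add: integrable_iff_bounded)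
  finally show ?thesis by (simp add: integrable_iff_bounded)
qed

lemma cond_mean_integrable: "integrable PX (cond_mean f)"
  using integrable_of_square_integrable[OF prob_space_PX measurable_cond_mean cond_mean_square_integrable] .

lemma integral_cond_mean_square: "(\<integral>x. (cond_mean f x)\<^sup>2 \<partial>PX) = (\<integral>k. weight k * (block_mean f k)\<^sup>2 \<partial>count_space K)"
  unfolding integral_PX(2)[OF cond_mean_square_integrable]
  by (rule Bochner_Integration.integral_cong[OF refl])
     (simp add: cond_mean_def measure_Phi_space)

lemma integral_PX_block_mean: "(\<integral>x. f x \<partial>PX) = (\<integral>k. weight k * block_mean f k \<partial>count_space K)"
  unfolding integral_PX(2)[OF integrable_PX_of_square] block_mean_def ..

lemma integral_cond_mean: "(\<integral>x. cond_mean f x \<partial>PX) = (\<integral>x. f x \<partial>PX)"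
  unfolding integral_PX(2)[OF cond_mean_integrable] integral_PX_block_mean
  by (rule Bochner_Integration.integral_cong[OF refl])
     (simp add: cond_mean_def measure_Phi_space)

lemma integrable_mult_cond_mean: "integrable PX (\<lambda>x. f x * cond_mean f x)"
  using fm f2 cond_mean_square_integrable by (intro integrable_mult_of_square_integrable) auto

lemma integral_mult_cond_mean: "(\<integral>x. f x * cond_mean f x \<partial>PX) = (\<integral>x. (cond_mean f x)\<^sup>2 \<partial>PX)"
  unfolding integral_PX(2)[OF integrable_mult_cond_mean] integral_cond_mean_square
proof (rule Bochner_Integration.integral_cong[OF refl])
  fix k assume "k \<in> space (count_space K)"
  then have k: "k \<in> K" by simp
  have "(\<integral>z. f (k, z) * cond_mean f (k, z) \<partial>Phi k) = (\<integral>z. f (k, z) \<partial>Phi k) * block_mean f k"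
    by (simp add: cond_mean_def)
  then show "weight k * (\<integral>z. f (k, z) * cond_mean f (k, z) \<partial>Phi k) = weight k * (block_mean f k)\<^sup>2"
    by (simp add: block_mean_def power2_eq_square)
qed

lemma square_diff_cond_mean_eq: "(\<lambda>x. (f x - cond_mean f x)\<^sup>2) = (\<lambda>x. (f x)\<^sup>2 + (cond_mean f x)\<^sup>2 - 2 * (f x * cond_mean f x))"
  by (auto simp: fun_eq_iff power2_diff)

lemma integrable_within: "integrable PX (\<lambda>x. (f x - cond_mean f x)\<^sup>2)"
  unfolding square_diff_cond_mean_eq using f2 cond_mean_square_integrable integrable_mult_cond_mean by simp

lemma integral_within: "(\<integral>x. (f x - cond_mean f x)\<^sup>2 \<partial>PX) = (\<integral>x. (f x)\<^sup>2 \<partial>PX) - (\<integral>x. (cond_mean f x)\<^sup>2 \<partial>PX)"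
  unfolding square_diff_cond_mean_eq using f2 cond_mean_square_integrable integrable_mult_cond_mean integral_mult_cond_mean by simp

end


lemma nn_integral_minorised_block:
  assumes mu: "sets \<mu> = sets PX" and k: "k \<in> K" and nu: "sets \<nu> = sets (Psi k)" and r: "0 \<le> r"
    and le: "\<And>B. B \<in> sets PX \<Longrightarrow> ennreal r * emeasure \<nu> (Pair k -` B \<inter> space (Psi k)) \<le> emeasure \<mu> B"
    and phi: "\<phi> \<in> borel_measurable PX"
  shows "ennreal r * (\<integral>\<^sup>+w. \<phi> (k, w) \<partial>\<nu>) \<le> (\<integral>\<^sup>+y. \<phi> y \<partial>\<mu>)"
proof -
  have pm: "Pair k \<in> \<nu> \<rightarrow>\<^sub>M PX" unfolding measurable_cong_sets[OF nu refl] by (rule measurable_Pair_block[OF k])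
  have spn: "space \<nu> = space (Psi k)" using nu by (rule sets_eq_imp_space_eq)
  define \<nu>' where "\<nu>' = scale_measure (ennreal r) (distr \<nu> PX (Pair k))"
  have s': "sets \<nu>' = sets \<mu>" using mu by (simp add: \<nu>'_def)
  have "\<nu>' \<le> \<mu>"
  proof -
    have "\<forall>B\<in>sets \<nu>'. emeasure \<nu>' B \<le> emeasure \<mu> B"
    proof
      fix B assume "B \<in> sets \<nu>'"
      then have B: "B \<in> sets PX" by (simp add: \<nu>'_def)
      have "emeasure \<nu>' B = ennreal r * emeasure \<nu> (Pair k -` B \<inter> space (Psi k))"
        unfolding \<nu>'_def emeasure_scale_measure emeasure_distr[OF pm B] spn ..
      then show "emeasure \<nu>' B \<le> emeasure \<mu> B" using le[OF B] by simp
    qed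
    then show ?thesis using le_measure[OF s'] by blast
  qed
  then have "(\<integral>\<^sup>+y. \<phi> y \<partial>\<nu>') \<le> (\<integral>\<^sup>+y. \<phi> y \<partial>\<mu>)" by (rule nn_integral_mono_measure[OF s'])
  moreover have "(\<integral>\<^sup>+y. \<phi> y \<partial>\<nu>') = ennreal r * (\<integral>\<^sup>+w. \<phi> (k, w) \<partial>\<nu>)"
  proof -
    have pd: "\<phi> \<in> borel_measurable (distr \<nu> PX (Pair k))"
      using phi measurable_cong_sets[OF sets_distr[of \<nu> PX "Pair k"] refl] by blast
    have "(\<integral>\<^sup>+y. \<phi> y \<partial>\<nu>') = ennreal r * (\<integral>\<^sup>+y. \<phi> y \<partial>distr \<nu> PX (Pair k))"
      unfolding \<nu>'_def by (rule nn_integral_scale_measure[OF pd])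
    also have "(\<integral>\<^sup>+y. \<phi> y \<partial>distr \<nu> PX (Pair k)) = (\<integral>\<^sup>+w. \<phi> (k, w) \<partial>\<nu>)"
      by (rule nn_integral_distr[OF pm pd])
    finally show ?thesis .
  qed
  ultimately show ?thesis by simp
qed

end

section \<open>Block-wise minorisation\<close>

locale block_minorisation = block_space K Psi for K :: "'k set" and Psi :: "'k \<Rightarrow> 'z measure" +
  fixes P :: "'k \<times> 'z \<Rightarrow> ('k \<times> 'z) measure"
    and Pk :: "'k \<Rightarrow> 'z \<Rightarrow> 'z measure" and c :: "'k \<Rightarrow> real" and t :: nat
  assumes P_kernel: "P \<in> PiX K Psi \<rightarrow>\<^sub>M prob_algebra (PiX K Psi)"
    and P_inv: "bind (PiX K Psi) P = PiX K Psi"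
    and Pk_kernel: "\<And>k. k \<in> K \<Longrightarrow> Pk k \<in> Psi k \<rightarrow>\<^sub>M prob_algebra (Psi k)"
    and Pk_inv: "\<And>k. k \<in> K \<Longrightarrow> bind (normalise (Psi k)) (Pk k) = normalise (Psi k)"
    and t_pos: "t > 0"
    and c_pos: "\<And>k. k \<in> K \<Longrightarrow> c k > 0"
    and minor: "\<And>k z A. k \<in> K \<Longrightarrow> z \<in> space (Psi k) \<Longrightarrow> A \<in> sets (Psi k) \<Longrightarrow>
                  measure (P (k, z)) ({k} \<times> A) \<ge> c k * measure (Pk k z) A"
begin

definition "Q = kpow PX P t"
definition "Qk k = kpow (Psi k) (Pk k) t"
definition "a = (INF k\<in>K. c k ^ t)"
definition "b = (SUP k\<in>K. opnorm (Phi k) (Qk k))"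

sublocale P: invariant_kernel PX P
  by (rule invariant_kernel.intro[OF prob_space_PX P_kernel P_inv])

sublocale Q: invariant_kernel PX Q
  unfolding Q_def by (rule P.invariant_kernel_kpow)

lemma invariant_Pk: "k \<in> K \<Longrightarrow> invariant_kernel (Phi k) (Pk k)"
proof (intro invariant_kernel.intro)
  assume k: "k \<in> K"
  show "prob_space (Phi k)" by (rule prob_space_Phi[OF k])
  show "Pk k \<in> Phi k \<rightarrow>\<^sub>M prob_algebra (Phi k)"
    using Pk_kernel[OF k] prob_algebra_cong[of "Phi k" "Psi k"] by (simp cong: measurable_cong_sets)
  show "Phi k \<bind> Pk k = Phi k" using Pk_inv[OF k] by (simp add: Phi_def)
qed

lemma Qk_eq: "Qk k = kpow (Phi k) (Pk k) t"
  unfolding Qk_def by (rule kpow_cong_sets) simp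

lemma invariant_Qk: "k \<in> K \<Longrightarrow> invariant_kernel (Phi k) (Qk k)"
  unfolding Qk_eq by (rule invariant_kernel.invariant_kernel_kpow[OF invariant_Pk])

lemma Pair_in_space_PX: "k \<in> K \<Longrightarrow> z \<in> space (Psi k) \<Longrightarrow> (k, z) \<in> space PX"
  by (simp add: space_PX Xspace_def)

lemma prob_space_Pk: "k \<in> K \<Longrightarrow> z \<in> space (Psi k) \<Longrightarrow> prob_space (Pk k z)"
  using invariant_kernel.prob_space_kernel[OF invariant_Pk] by simp

lemma sets_Pk: "k \<in> K \<Longrightarrow> z \<in> space (Psi k) \<Longrightarrow> sets (Pk k z) = sets (Psi k)"
  using invariant_kernel.sets_kernel[OF invariant_Pk] by simp

lemma prob_space_Qk: "k \<in> K \<Longrightarrow> z \<in> space (Psi k) \<Longrightarrow> prob_space (Qk k z)"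
  using invariant_kernel.prob_space_kernel[OF invariant_Qk] by simp

lemma sets_Qk: "k \<in> K \<Longrightarrow> z \<in> space (Psi k) \<Longrightarrow> sets (Qk k z) = sets (Psi k)"
  using invariant_kernel.sets_kernel[OF invariant_Qk] by simp

lemma c_le_1: "k \<in> K \<Longrightarrow> c k \<le> 1"
proof -
  assume k: "k \<in> K"
  obtain z where z: "z \<in> space (Psi k)" using space_Psi_ne[OF k] by blast
  have "c k * measure (Pk k z) (space (Psi k)) \<le> measure (P (k, z)) ({k} \<times> space (Psi k))"
    using minor[OF k z] by simp
  moreover have "measure (Pk k z) (space (Psi k)) = 1"
    using prob_space.prob_space[OF prob_space_Pk[OF k z]] sets_eq_imp_space_eq[OF sets_Pk[OF k z]] by simp
  moreover have "measure (P (k, z)) ({k} \<times> space (Psi k)) \<le> 1"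
    using prob_space.prob_le_1[OF P.prob_space_kernel[OF Pair_in_space_PX[OF k z]]] by simp
  ultimately show ?thesis by simp
qed

lemma emeasure_minorisation:
  assumes k: "k \<in> K" and z: "z \<in> space (Psi k)" and B: "B \<in> sets PX"
  shows "ennreal (c k) * emeasure (Pk k z) (Pair k -` B \<inter> space (Psi k)) \<le> emeasure (P (k, z)) B"
proof -
  define A where "A = Pair k -` B \<inter> space (Psi k)"
  have A: "A \<in> sets (Psi k)" unfolding A_def using measurable_sets[OF measurable_Pair_block[OF k] B] .
  interpret p: prob_space "P (k, z)" using P.prob_space_kernel[OF Pair_in_space_PX[OF k z]] .
  interpret q: prob_space "Pk k z" using prob_space_Pk[OF k z] .
  have "ennreal (c k) * emeasure (Pk k z) A = ennreal (c k * measure (Pk k z) A)"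
    using c_pos[OF k] by (simp add: q.emeasure_eq_measure ennreal_mult)
  also have "\<dots> \<le> ennreal (measure (P (k, z)) ({k} \<times> A))" using minor[OF k z A] by simp
  also have "\<dots> = emeasure (P (k, z)) ({k} \<times> A)" by (simp add: p.emeasure_eq_measure)
  also have "\<dots> \<le> emeasure (P (k, z)) B"
    using rect_in_sets_PX[OF k A] B P.sets_kernel[OF Pair_in_space_PX[OF k z]]
    by (intro emeasure_mono) (auto simp: A_def)
  finally show ?thesis unfolding A_def .
qed

lemma emeasure_kpow_minorisation:
  assumes k: "k \<in> K"
  shows "z \<in> space (Psi k) \<Longrightarrow> B \<in> sets PX \<Longrightarrow>
    ennreal (c k ^ n) * emeasure (kpow (Psi k) (Pk k) n z) (Pair k -` B \<inter> space (Psi k))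
      \<le> emeasure (kpow PX P n (k, z)) B"
proof (induction n arbitrary: z B)
  case 0
  have "Pair k -` B \<inter> space (Psi k) \<in> sets (Psi k)"
    using measurable_sets[OF measurable_Pair_block[OF k] 0(2)] .
  then show ?case using Pair_in_space_PX[OF k 0(1)] 0 by (auto simp: indicator_def)
next
  case (Suc n)
  note z = Suc.prems(1) and B = Suc.prems(2)
  define Bk where "Bk = Pair k -` B \<inter> space (Psi k)"
  have Bk: "Bk \<in> sets (Psi k)" unfolding Bk_def using measurable_sets[OF measurable_Pair_block[OF k] B] .
  have kpm: "kpow PX P n \<in> PX \<rightarrow>\<^sub>M subprob_algebra PX"
    using measurable_prob_algebraD[OF P.kpow_kernel] .
  have PM: "kpow PX P n \<in> P (k, z) \<rightarrow>\<^sub>M subprob_algebra PX"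
    using kpm P.sets_kernel[OF Pair_in_space_PX[OF k z]] by (simp cong: measurable_cong_sets)
  have PkM: "kpow (Psi k) (Pk k) n \<in> Pk k z \<rightarrow>\<^sub>M subprob_algebra (Psi k)"
    using measurable_prob_algebraD[OF invariant_kernel.kpow_kernel[OF invariant_Pk[OF k]]]
      kpow_cong_sets[of "Phi k" "Psi k"] sets_Pk[OF k z] subprob_algebra_cong[of "Phi k" "Psi k"]
    by (simp cong: measurable_cong_sets)
  have "ennreal (c k ^ Suc n) * emeasure (kpow (Psi k) (Pk k) (Suc n) z) Bk
      = ennreal (c k) * (\<integral>\<^sup>+w. ennreal (c k ^ n) * emeasure (kpow (Psi k) (Pk k) n w) Bk \<partial>Pk k z)"
    using c_pos[OF k] prob_space.not_empty[OF prob_space_Pk[OF k z]]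
    by (simp add: emeasure_bind[OF _ PkM Bk] nn_integral_cmult[OF measurable_emeasure_kernel[OF PkM Bk]]
        ennreal_mult mult.assoc)
  also have "\<dots> \<le> ennreal (c k) * (\<integral>\<^sup>+w. emeasure (kpow PX P n (k, w)) B \<partial>Pk k z)"
  proof (intro mult_left_mono nn_integral_mono)
    fix w assume "w \<in> space (Pk k z)"
    then have w: "w \<in> space (Psi k)" using sets_eq_imp_space_eq[OF sets_Pk[OF k z]] by simp
    show "ennreal (c k ^ n) * emeasure (kpow (Psi k) (Pk k) n w) Bk \<le> emeasure (kpow PX P n (k, w)) B"
      using Suc.IH[OF w B] unfolding Bk_def .
  qed simp
  also have "\<dots> \<le> (\<integral>\<^sup>+y. emeasure (kpow PX P n y) B \<partial>P (k, z))"
    using c_pos[OF k] emeasure_minorisation[OF k z] measurable_emeasure_kernel[OF kpm B]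
    by (intro nn_integral_minorised_block[OF P.sets_kernel[OF Pair_in_space_PX[OF k z]] k sets_Pk[OF k z]]) auto
  also have "\<dots> = emeasure (kpow PX P (Suc n) (k, z)) B"
    using prob_space.not_empty[OF P.prob_space_kernel[OF Pair_in_space_PX[OF k z]]]
    by (simp add: emeasure_bind[OF _ PM B])
  finally show ?case unfolding Bk_def .
qed

lemma c_pow_nonneg: "k \<in> K \<Longrightarrow> 0 \<le> c k ^ t"
  using c_pos[of k] by simp

lemma a_le: "k \<in> K \<Longrightarrow> a \<le> c k ^ t"
  unfolding a_def by (rule cINF_lower) (auto intro!: bdd_belowI[where m=0] c_pow_nonneg)

lemma a_nonneg: "0 \<le> a"
  unfolding a_def using K(2) by (intro cINF_greatest) (auto intro!: c_pow_nonneg)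

lemma a_le_1: "a \<le> 1"
proof -
  obtain k where k: "k \<in> K" using K(2) by blast
  have "c k ^ t \<le> 1" using c_le_1[OF k] c_pos[OF k] by (simp add: power_le_one)
  then show ?thesis using a_le[OF k] by simp
qed

lemma b_ge: "k \<in> K \<Longrightarrow> opnorm (Phi k) (Qk k) \<le> b"
  unfolding b_def
  by (rule cSUP_upper) (auto intro!: bdd_aboveI[where M=1] invariant_kernel.opnorm_le_1[OF invariant_Qk])

lemma b_nonneg: "0 \<le> b"
proof -
  obtain k where k: "k \<in> K" using K(2) by blast
  then show ?thesis using b_ge[OF k] invariant_kernel.opnorm_nonneg[OF invariant_Qk[OF k]] by simp
qed

lemma b_le_1: "b \<le> 1"
  unfolding b_def using K(2) by (intro cSUP_least) (auto intro!: invariant_kernel.opnorm_le_1[OF invariant_Qk])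

lemma gap_factor_bounds: "0 \<le> a * (1 - b\<^sup>2)" "a * (1 - b\<^sup>2) \<le> 1"
  using a_nonneg a_le_1 b_nonneg b_le_1 by (auto simp: power_le_one mult_le_one)

lemma emeasure_Q_minorisation:
  "k \<in> K \<Longrightarrow> z \<in> space (Psi k) \<Longrightarrow> B \<in> sets PX \<Longrightarrow>
    ennreal (c k ^ t) * emeasure (Qk k z) (Pair k -` B \<inter> space (Psi k)) \<le> emeasure (Q (k, z)) B"
  unfolding Q_def Qk_def by (rule emeasure_kpow_minorisation)

end

context block_minorisation
begin

lemma kernel_variance_Qk_le:
  assumes fm: "f \<in> borel_measurable PX" and k: "k \<in> K" and z: "z \<in> space (Psi k)"
  shows "ennreal (c k ^ t) * kernel_variance (Qk k) (\<lambda>w. f (k, w)) z \<le> kernel_variance Q f (k, z)"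
proof -
  define C where "C = (\<integral>y. f y \<partial>Q (k, z))"
  have "(\<lambda>w. f (k, w)) \<in> borel_measurable (Qk k z)"
    unfolding measurable_cong_sets[OF sets_Qk[OF k z] refl] by (rule measurable_section[OF k fm])
  then have "kernel_variance (Qk k) (\<lambda>w. f (k, w)) z \<le> (\<integral>\<^sup>+w. ennreal ((f (k, w) - C)\<^sup>2) \<partial>Qk k z)"
    unfolding kernel_variance_def by (rule nn_integral_variance_le[OF prob_space_Qk[OF k z]])
  then have "ennreal (c k ^ t) * kernel_variance (Qk k) (\<lambda>w. f (k, w)) z
      \<le> ennreal (c k ^ t) * (\<integral>\<^sup>+w. ennreal ((f (k, w) - C)\<^sup>2) \<partial>Qk k z)"
    by (rule mult_left_mono) simp
  also have "\<dots> \<le> (\<integral>\<^sup>+y. ennreal ((f y - C)\<^sup>2) \<partial>Q (k, z))"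
    using c_pow_nonneg[OF k] emeasure_Q_minorisation[OF k z] fm
    by (intro nn_integral_minorised_block[OF Q.sets_kernel[OF Pair_in_space_PX[OF k z]] k sets_Qk[OF k z]])
       auto
  finally show ?thesis unfolding kernel_variance_def C_def .
qed

lemma block_variance_bound:
  assumes fm: "f \<in> borel_measurable PX" and f2: "integrable PX (\<lambda>x. (f x)\<^sup>2)" and k: "k \<in> K"
  shows "ennreal (a * (1 - b\<^sup>2) * (\<integral>z. (f (k, z) - cond_mean f (k, z))\<^sup>2 \<partial>Phi k))
      \<le> (\<integral>\<^sup>+z. ennreal (c k ^ t) * kernel_variance (Qk k) (\<lambda>w. f (k, w)) z \<partial>Phi k)"
proof -
  interpret Qk: invariant_kernel "Phi k" "Qk k" by (rule invariant_Qk[OF k])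
  note fk = section_measurable[OF fm f2 k] and fk2 = section_square_integrable[OF fm f2 k]
  define S where "S = (\<integral>z. (f (k, z))\<^sup>2 \<partial>Phi k)"
  define R where "R = (\<integral>z. (\<integral>w. f (k, w) \<partial>Qk k z)\<^sup>2 \<partial>Phi k)"
  define m where "m = block_mean f k"
  have var: "(\<integral>z. (f (k, z) - cond_mean f (k, z))\<^sup>2 \<partial>Phi k) = S - m\<^sup>2"
    using prob_space.variance_eq[OF prob_space_Phi[OF k] section_integrable[OF fm f2 k] fk2]
    by (simp add: cond_mean_def S_def m_def block_mean_def)
  have Sm: "0 \<le> S - m\<^sup>2" using block_mean_square_le[OF fm f2 k] by (simp add: S_def m_def)
  have "(opnorm (Phi k) (Qk k))\<^sup>2 \<le> b\<^sup>2"
    using b_ge[OF k] Qk.opnorm_nonneg by (intro power_mono) auto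
  then have "(1 - b\<^sup>2) * (S - m\<^sup>2) \<le> (1 - (opnorm (Phi k) (Qk k))\<^sup>2) * (S - m\<^sup>2)"
    using Sm by (intro mult_right_mono) auto
  also have "\<dots> \<le> S - R"
    using Qk.kernel_square_integral_le_opnorm_variance[OF fk fk2]
    by (simp add: R_def S_def m_def block_mean_def algebra_simps)
  finally have gap: "(1 - b\<^sup>2) * (S - m\<^sup>2) \<le> S - R" .
  have "0 \<le> (1 - b\<^sup>2) * (S - m\<^sup>2)"
    using Sm b_nonneg b_le_1 by (simp add: power_le_one)
  then have "a * ((1 - b\<^sup>2) * (S - m\<^sup>2)) \<le> c k ^ t * (S - R)"
    using a_le[OF k] a_nonneg gap by (intro mult_mono) auto
  then have "ennreal (a * (1 - b\<^sup>2) * (S - m\<^sup>2)) \<le> ennreal (c k ^ t * (S - R))"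
    by (simp add: ennreal_leI mult.assoc)
  also have "\<dots> = ennreal (c k ^ t) * ennreal (S - R)"
    by (rule ennreal_mult'[OF c_pow_nonneg[OF k]])
  also have "\<dots> = (\<integral>\<^sup>+z. ennreal (c k ^ t) * kernel_variance (Qk k) (\<lambda>w. f (k, w)) z \<partial>Phi k)"
    using Qk.nn_integral_kernel_variance[OF fk fk2]
    by (simp add: nn_integral_cmult[OF Qk.borel_measurable_kernel_variance[OF fk]] R_def S_def)
  finally show ?thesis using var by simp
qed

text \<open>The spectral gap of each block kernel, transferred to \<^const>\<open>Q\<close> by the minorisation,
  controls the part of \<^term>\<open>f\<close> orthogonal to its block means.\<close>
lemma within_block_bound:
  assumes fm: "f \<in> borel_measurable PX" and f2: "integrable PX (\<lambda>x. (f x)\<^sup>2)"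
  shows "a * (1 - b\<^sup>2) * (\<integral>x. (f x - cond_mean f x)\<^sup>2 \<partial>PX)
      \<le> (\<integral>x. (f x)\<^sup>2 \<partial>PX) - (\<integral>x. (\<integral>y. f y \<partial>Q x)\<^sup>2 \<partial>PX)"
proof -
  define W where "W k z = ennreal (c k ^ t) * kernel_variance (Qk k) (\<lambda>w. f (k, w)) z" for k z
  define V where "V k = (\<integral>z. (f (k, z) - cond_mean f (k, z))\<^sup>2 \<partial>Phi k)" for k
  have W_meas: "W k \<in> borel_measurable (Psi k)" if k: "k \<in> K" for k
    using invariant_kernel.borel_measurable_kernel_variance[OF invariant_Qk[OF k] section_measurable[OF fm f2 k]]
    unfolding W_def by (simp cong: measurable_cong_sets)
  have "ennreal (a * (1 - b\<^sup>2) * (\<integral>x. (f x - cond_mean f x)\<^sup>2 \<partial>PX))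
      = ennreal (a * (1 - b\<^sup>2)) * (\<integral>\<^sup>+k. ennreal (weight k * V k) \<partial>count_space K)"
    using ennreal_integral_PX_nonneg[OF integrable_within[OF fm f2]] gap_factor_bounds
    by (simp add: ennreal_mult V_def)
  also have "\<dots> = (\<integral>\<^sup>+k. ennreal (a * (1 - b\<^sup>2)) * ennreal (weight k * V k) \<partial>count_space K)"
    by (rule nn_integral_cmult[symmetric]) simp
  also have "\<dots> = (\<integral>\<^sup>+k. ennreal (weight k) * ennreal (a * (1 - b\<^sup>2) * V k) \<partial>count_space K)"
  proof (rule nn_integral_cong)
    fix k
    have "ennreal (a * (1 - b\<^sup>2)) * ennreal (weight k * V k) = ennreal (a * (1 - b\<^sup>2) * (weight k * V k))"
      using gap_factor_bounds(1) by (simp add: ennreal_mult')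
    also have "\<dots> = ennreal (weight k * (a * (1 - b\<^sup>2) * V k))" by (simp add: mult_ac)
    also have "\<dots> = ennreal (weight k) * ennreal (a * (1 - b\<^sup>2) * V k)"
      by (rule ennreal_mult') (simp add: weight_def)
    finally show "ennreal (a * (1 - b\<^sup>2)) * ennreal (weight k * V k) = ennreal (weight k) * ennreal (a * (1 - b\<^sup>2) * V k)" .
  qed
  also have "\<dots> \<le> (\<integral>\<^sup>+k. ennreal (weight k) * (\<integral>\<^sup>+z. W k z \<partial>Phi k) \<partial>count_space K)"
    using block_variance_bound[OF fm f2] by (intro nn_integral_mono mult_left_mono) (auto simp: V_def W_def)
  also have "\<dots> = (\<integral>\<^sup>+x. W (fst x) (snd x) \<partial>PX)"
    using measurable_PX_glue[of W, OF W_meas] by (simp add: nn_integral_PX)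
  also have "\<dots> \<le> (\<integral>\<^sup>+x. kernel_variance Q f x \<partial>PX)"
    using kernel_variance_Qk_le[OF fm] by (intro nn_integral_mono) (auto simp: W_def space_PX Xspace_def)
  also have "\<dots> = ennreal ((\<integral>x. (f x)\<^sup>2 \<partial>PX) - (\<integral>x. (\<integral>y. f y \<partial>Q x)\<^sup>2 \<partial>PX))"
    by (rule Q.nn_integral_kernel_variance[OF fm f2])
  finally show ?thesis
    using Q.kernel_square_integral_le[OF fm f2] by simp
qed

end

section \<open>The projected chain on the blocks\<close>

context block_minorisation
begin

definition "block k = {k} \<times> space (Psi k)"
definition "block_prob k x = measure (P x) (block k)"
text \<open>\<open>flow k k'\<close> is \<open>weight k\<close> times the entry \<open>(k, k')\<close> of the matrix \<open>M_P\<close>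
  of the projected chain, see \<open>barP_weight_eq\<close>.\<close>
definition "flow k k' = (\<integral>x. block_prob k x * block_prob k' x \<partial>PX)"

lemma block_in_sets: "k \<in> K \<Longrightarrow> block k \<in> sets PX" unfolding block_def by (rule block_in_sets_PX)

lemma measurable_block_prob[measurable]: "k \<in> K \<Longrightarrow> (\<lambda>x. block_prob k x) \<in> borel_measurable PX"
  unfolding block_prob_def measure_def by (intro borel_measurable_enn2real measurable_emeasure_kernel[OF P.kernel_subprob block_in_sets])

lemma block_prob_nonneg: "0 \<le> block_prob k x" by (simp add: block_prob_def)

lemma block_prob_le_1: "x \<in> space PX \<Longrightarrow> block_prob k x \<le> 1"
  unfolding block_prob_def using prob_space.prob_le_1[OF P.prob_space_kernel] by simp

lemma emeasure_block_eq: "x \<in> space PX \<Longrightarrow> emeasure (P x) (block k) = ennreal (block_prob k x)"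
proof -
  assume x: "x \<in> space PX"
  interpret pr: prob_space "P x" by (rule P.prob_space_kernel[OF x])
  show ?thesis unfolding block_prob_def by (rule pr.emeasure_eq_measure)
qed

lemma pair_sigma_finite_K_PX: "pair_sigma_finite (count_space K) PX"
proof -
  interpret p: prob_space PX by (rule prob_space_PX)
  show ?thesis unfolding pair_sigma_finite_def
    using sigma_finite_measure_count_space_countable[OF K(1)] p.sigma_finite_measure_axioms by simp
qed

lemma nn_integral_block_prob_sum: "x \<in> space PX \<Longrightarrow> (\<integral>\<^sup>+k. ennreal (block_prob k x) \<partial>count_space K) = 1"
proof -
  assume x: "x \<in> space PX"
  have sP: "sets (P x) = sets PX" by (rule P.sets_kernel[OF x])
  have "(\<integral>\<^sup>+k. ennreal (block_prob k x) \<partial>count_space K) = (\<integral>\<^sup>+k. emeasure (P x) (block k) \<partial>count_space K)"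
    by (intro nn_integral_cong) (simp add: emeasure_block_eq[OF x])
  also have "\<dots> = emeasure (P x) (\<Union>(block ` K))"
  proof (rule emeasure_UN_countable[symmetric])
    show "\<And>i. i \<in> K \<Longrightarrow> block i \<in> sets (P x)" using block_in_sets sP by simp
    show "countable K" by (rule K(1))
    show "disjoint_family_on block K" unfolding disjoint_family_on_def block_def by auto
  qed
  also have "\<Union>(block ` K) = space (P x)"
    using sets_eq_imp_space_eq[OF sP] by (auto simp: block_def space_PX Xspace_def)
  also have "emeasure (P x) (space (P x)) = 1" using prob_space.emeasure_space_1[OF P.prob_space_kernel[OF x]] .
  finally show ?thesis .
qed

lemma nn_integral_block_prob: "k \<in> K \<Longrightarrow> (\<integral>\<^sup>+x. ennreal (block_prob k x) \<partial>PX) = ennreal (weight k)"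
proof -
  assume k: "k \<in> K"
  have "(\<integral>\<^sup>+x. ennreal (block_prob k x) \<partial>PX) = (\<integral>\<^sup>+x. emeasure (P x) (block k) \<partial>PX)"
    by (intro nn_integral_cong) (simp add: emeasure_block_eq)
  also have "\<dots> = emeasure (bind PX P) (block k)"
    using prob_space.not_empty[OF prob_space_PX] by (intro emeasure_bind[symmetric, OF _ P.kernel_subprob block_in_sets[OF k]])
  also have "\<dots> = emeasure PX (block k)" using P_inv by simp
  also have "\<dots> = ennreal (weight k)" using emeasure_PX_block[OF k] ennreal_weight[OF k] by (simp add: block_def)
  finally show ?thesis .
qed

lemma integrable_block_prob_mult: "k \<in> K \<Longrightarrow> k' \<in> K \<Longrightarrow> integrable PX (\<lambda>x. block_prob k x * block_prob k' x)"
proof -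
  assume k: "k \<in> K" and k': "k' \<in> K"
  interpret pr: prob_space PX by (rule prob_space_PX)
  show ?thesis
  proof (rule pr.integrable_const_bound[where B=1])
    show "AE x in PX. norm (block_prob k x * block_prob k' x) \<le> 1"
      by (intro AE_I2) (use block_prob_le_1 block_prob_nonneg in \<open>auto intro!: mult_le_one simp: abs_mult\<close>)
  qed (use k k' in measurable)
qed

lemma flow_nonneg: "0 \<le> flow k k'" unfolding flow_def by (intro integral_nonneg_AE AE_I2) (simp add: block_prob_nonneg)
lemma flow_sym: "flow k k' = flow k' k" unfolding flow_def by (simp add: mult.commute)

lemma nn_integral_flow_eq: "k \<in> K \<Longrightarrow> k' \<in> K \<Longrightarrow> (\<integral>\<^sup>+x. ennreal (block_prob k x * block_prob k' x) \<partial>PX) = ennreal (flow k k')"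
  unfolding flow_def by (rule nn_integral_eq_integral[OF integrable_block_prob_mult]) (auto simp: block_prob_nonneg)

lemma nn_integral_flow_row: "k \<in> K \<Longrightarrow> (\<integral>\<^sup>+k'. ennreal (flow k k') \<partial>count_space K) = ennreal (weight k)"
proof -
  assume k: "k \<in> K"
  interpret ps: pair_sigma_finite "count_space K" PX by (rule pair_sigma_finite_K_PX)
  have meas: "(\<lambda>(k', x). ennreal (block_prob k x * block_prob k' x)) \<in> borel_measurable (count_space K \<Otimes>\<^sub>M PX)"
  proof (rule measurable_pair_measure_countable1[OF K(1)])
    fix k' assume k': "k' \<in> K"
    note [measurable] = measurable_block_prob[OF k] measurable_block_prob[OF k']
    show "(\<lambda>x. case (k', x) of (k', x) \<Rightarrow> ennreal (block_prob k x * block_prob k' x)) \<in> borel_measurable PX" by simp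
  qed
  have "(\<integral>\<^sup>+k'. ennreal (flow k k') \<partial>count_space K) = (\<integral>\<^sup>+k'. \<integral>\<^sup>+x. ennreal (block_prob k x * block_prob k' x) \<partial>PX \<partial>count_space K)"
    by (intro nn_integral_cong) (simp add: nn_integral_flow_eq k)
  also have "\<dots> = (\<integral>\<^sup>+x. \<integral>\<^sup>+k'. ennreal (block_prob k x * block_prob k' x) \<partial>count_space K \<partial>PX)"
    using ps.Fubini'[OF meas] by simp
  also have "\<dots> = (\<integral>\<^sup>+x. ennreal (block_prob k x) \<partial>PX)"
  proof (rule nn_integral_cong)
    fix x assume x: "x \<in> space PX"
    have "(\<integral>\<^sup>+k'. ennreal (block_prob k x * block_prob k' x) \<partial>count_space K) = (\<integral>\<^sup>+k'. ennreal (block_prob k x) * ennreal (block_prob k' x) \<partial>count_space K)"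
      by (simp add: ennreal_mult block_prob_nonneg)
    also have "\<dots> = ennreal (block_prob k x) * (\<integral>\<^sup>+k'. ennreal (block_prob k' x) \<partial>count_space K)"
      by (rule nn_integral_cmult) simp
    also have "\<dots> = ennreal (block_prob k x)" using nn_integral_block_prob_sum[OF x] by simp
    finally show "(\<integral>\<^sup>+k'. ennreal (block_prob k x * block_prob k' x) \<partial>count_space K) = ennreal (block_prob k x)" .
  qed
  also have "\<dots> = ennreal (weight k)" by (rule nn_integral_block_prob[OF k])
  finally show ?thesis .
qed

lemma mass_real: "mass = ennreal (enn2real mass)" using mass_finite by simp
lemma mass_real_pos: "0 < enn2real mass" using mass_finite mass_nonzero by (simp add: enn2real_positive_iff less_top[symmetric] zero_less_iff_neq_zero)
lemma block_mass_real: "k \<in> K \<Longrightarrow> block_mass k = ennreal (enn2real (block_mass k))" using block_mass_finite by simp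
lemma block_mass_real_pos: "k \<in> K \<Longrightarrow> 0 < enn2real (block_mass k)" using block_mass_finite block_mass_nonzero by (simp add: enn2real_positive_iff less_top[symmetric] zero_less_iff_neq_zero)
lemma weight_real: "k \<in> K \<Longrightarrow> weight k = enn2real (block_mass k) / enn2real mass"
  unfolding weight_def using mass_real_pos by (subst block_mass_real, simp, subst mass_real) (simp add: divide_ennreal)

lemma barP_weight_eq: "k \<in> K \<Longrightarrow> k' \<in> K \<Longrightarrow> barP_weight K Psi P k k' = ennreal (flow k k' / weight k)"
proof -
  assume k: "k \<in> K" and k': "k' \<in> K"
  define \<phi> where "\<phi> x = emeasure (P x) ({k} \<times> space (Psi k)) * emeasure (P x) ({k'} \<times> space (Psi k'))" for x
  have \<phi>m: "\<phi> \<in> borel_measurable PX"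
    unfolding \<phi>_def using measurable_emeasure_kernel[OF P.kernel_subprob block_in_sets_PX[OF k]] measurable_emeasure_kernel[OF P.kernel_subprob block_in_sets_PX[OF k']]
    by measurable
  have "(\<integral>\<^sup>+x. \<phi> x \<partial>PX) = ennreal (flow k k')"
  proof -
    have "(\<integral>\<^sup>+x. \<phi> x \<partial>PX) = (\<integral>\<^sup>+x. ennreal (block_prob k x * block_prob k' x) \<partial>PX)"
      by (intro nn_integral_cong) (simp add: \<phi>_def emeasure_block_eq[unfolded block_def] ennreal_mult block_prob_nonneg)
    then show ?thesis using nn_integral_flow_eq[OF k k'] by simp
  qed
  moreover have "(\<integral>\<^sup>+x. \<phi> x \<partial>PX) = inverse mass * (\<integral>\<^sup>+k''. (\<integral>\<^sup>+z. \<phi> (k'', z) \<partial>Psi k'') \<partial>count_space K)"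
    unfolding nn_integral_PX_mass[OF \<phi>m] by (rule nn_integral_cmult) simp
  ultimately have eq: "(\<integral>\<^sup>+k''. (\<integral>\<^sup>+z. \<phi> (k'', z) \<partial>Psi k'') \<partial>count_space K) = ennreal (enn2real mass * flow k k')"
  proof -
    assume a1: "(\<integral>\<^sup>+x. \<phi> x \<partial>PX) = ennreal (flow k k')"
      and a2: "(\<integral>\<^sup>+x. \<phi> x \<partial>PX) = inverse mass * (\<integral>\<^sup>+k''. (\<integral>\<^sup>+z. \<phi> (k'', z) \<partial>Psi k'') \<partial>count_space K)"
    have "mass * (inverse mass * (\<integral>\<^sup>+k''. (\<integral>\<^sup>+z. \<phi> (k'', z) \<partial>Psi k'') \<partial>count_space K))
        = (\<integral>\<^sup>+k''. (\<integral>\<^sup>+z. \<phi> (k'', z) \<partial>Psi k'') \<partial>count_space K)"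
      using mass_nonzero mass_finite ennreal_inverse_mult_self[of mass] by (simp add: mult.assoc[symmetric] mult.commute)
    then show ?thesis using a1 a2 mass_real flow_nonneg by (metis ennreal_mult mass_real_pos less_imp_le)
  qed
  have "barP_weight K Psi P k k' = ennreal (enn2real mass * flow k k') / block_mass k"
    unfolding barP_weight_def using eq by (simp add: \<phi>_def block_mass_def)
  also have "\<dots> = ennreal (enn2real mass * flow k k' / enn2real (block_mass k))"
    using block_mass_real_pos[OF k] mass_real_pos flow_nonneg[of k k'] by (subst block_mass_real[OF k]) (simp add: divide_ennreal)
  also have "enn2real mass * flow k k' / enn2real (block_mass k) = flow k k' / weight k"
    using mass_real_pos block_mass_real_pos[OF k] by (simp add: weight_real[OF k] field_simps)
  finally show ?thesis .
qed

lemma emeasure_density_count_space_singleton: "k' \<in> K \<Longrightarrow> emeasure (density (count_space K) f) {k'} = f k'"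
proof -
  assume k': "k' \<in> K"
  have "emeasure (density (count_space K) f) {k'} = (\<integral>\<^sup>+x. f x * indicator {k'} x \<partial>count_space K)"
    using k' by (simp add: emeasure_density)
  also have "\<dots> = f k' * emeasure (count_space K) {k'}"
    using k' by (intro nn_integral_indicator_singleton) simp
  also have "\<dots> = f k'" using k' by simp
  finally show ?thesis .
qed

lemma emeasure_density_count_space: "emeasure (density (count_space K) f) K = (\<integral>\<^sup>+k. f k \<partial>count_space K)"
proof -
  have "emeasure (density (count_space K) f) K = (\<integral>\<^sup>+x. f x * indicator K x \<partial>count_space K)"
    by (simp add: emeasure_density)
  also have "\<dots> = (\<integral>\<^sup>+k. f k \<partial>count_space K)" by (intro nn_integral_cong) simp
  finally show ?thesis .
qed

lemma nn_integral_weight: "(\<integral>\<^sup>+k. ennreal (weight k) \<partial>count_space K) = 1"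
proof -
  have "1 = emeasure PX (space PX)" using prob_space.emeasure_space_1[OF prob_space_PX] by simp
  also have "\<dots> = (\<integral>\<^sup>+x. 1 \<partial>PX)" by simp
  also have "\<dots> = (\<integral>\<^sup>+k. ennreal (weight k) * (\<integral>\<^sup>+z. 1 \<partial>Phi k) \<partial>count_space K)"
    by (rule nn_integral_PX) simp
  also have "\<dots> = (\<integral>\<^sup>+k. ennreal (weight k) \<partial>count_space K)"
    by (intro nn_integral_cong) (simp add: prob_space.emeasure_space_1[OF prob_space_Phi, simplified])
  finally show ?thesis ..
qed

lemma barPi_eq: "barPi K Psi = density (count_space K) (\<lambda>k. ennreal (weight k))"
  unfolding barPi_def
  by (rule density_cong) (auto simp: AE_count_space emeasure_PX_block ennreal_weight)

lemma barP_eq: "k \<in> K \<Longrightarrow> barP K Psi P k = density (count_space K) (\<lambda>k'. ennreal (flow k k' / weight k))"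
  unfolding barP_def
  by (rule density_cong) (auto simp: AE_count_space barP_weight_eq)

lemma sets_barPi[simp]: "sets (barPi K Psi) = Pow K" by (simp add: barPi_eq)
lemma space_barPi[simp]: "space (barPi K Psi) = K" by (simp add: barPi_eq)

lemma prob_space_barPi: "prob_space (barPi K Psi)"
proof
  show "emeasure (barPi K Psi) (space (barPi K Psi)) = 1"
    unfolding barPi_eq using nn_integral_weight by (simp add: emeasure_density_count_space)
qed

lemma prob_space_barP: "k \<in> K \<Longrightarrow> prob_space (barP K Psi P k)"
proof
  assume k: "k \<in> K"
  have "(\<integral>\<^sup>+k'. ennreal (flow k k' / weight k) \<partial>count_space K) = (\<integral>\<^sup>+k'. ennreal (flow k k') * ennreal (1 / weight k) \<partial>count_space K)"
    using weight_pos[OF k] flow_nonneg by (intro nn_integral_cong) (simp add: ennreal_mult[symmetric])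
  also have "\<dots> = (\<integral>\<^sup>+k'. ennreal (flow k k') \<partial>count_space K) * ennreal (1 / weight k)"
    by (rule nn_integral_multc) simp
  also have "\<dots> = 1" using nn_integral_flow_row[OF k] weight_pos[OF k] by (simp add: ennreal_mult[symmetric])
  finally show "emeasure (barP K Psi P k) (space (barP K Psi P k)) = 1"
    using k by (simp add: barP_eq emeasure_density_count_space)
qed

lemma sets_barP: "k \<in> K \<Longrightarrow> sets (barP K Psi P k) = Pow K" by (simp add: barP_eq)

lemma invariant_barP: "invariant_kernel (barPi K Psi) (barP K Psi P)"
proof (intro invariant_kernel.intro)
  show "prob_space (barPi K Psi)" by (rule prob_space_barPi)
  show bm: "barP K Psi P \<in> barPi K Psi \<rightarrow>\<^sub>M prob_algebra (barPi K Psi)"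
    unfolding measurable_cong_sets[OF sets_barPi[unfolded sets_count_space[of K, symmetric]] refl]
  proof (rule measurable_count_space_eq1[THEN iffD2], rule Pi_I)
    fix k assume k: "k \<in> K"
    show "barP K Psi P k \<in> space (prob_algebra (barPi K Psi))"
      using prob_space_barP[OF k] sets_barP[OF k] by (simp add: space_prob_algebra)
  qed
  show "barPi K Psi \<bind> barP K Psi P = barPi K Psi"
  proof (rule measure_eqI_countable[OF _ _ K(1)])
    show "sets (barPi K Psi \<bind> barP K Psi P) = Pow K"
      using K(2) by (subst sets_bind[where N="count_space K"]) (auto simp: sets_barP)
    show "sets (barPi K Psi) = Pow K" by simp
    fix k' assume k': "k' \<in> K"
    have "emeasure (barPi K Psi \<bind> barP K Psi P) {k'} = (\<integral>\<^sup>+k. emeasure (barP K Psi P k) {k'} \<partial>barPi K Psi)"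
      using K(2) k' measurable_prob_algebraD[OF bm] by (intro emeasure_bind) (auto simp: sets_barP)
    also have "\<dots> = (\<integral>\<^sup>+k. ennreal (weight k) * ennreal (flow k k' / weight k) \<partial>count_space K)"
      unfolding barPi_eq
      by (subst nn_integral_density) (auto intro!: nn_integral_cong simp: barP_eq emeasure_density_count_space_singleton k')
    also have "\<dots> = (\<integral>\<^sup>+k. ennreal (flow k' k) \<partial>count_space K)"
    proof (intro nn_integral_cong)
      fix k assume "k \<in> space (count_space K)"
      then have k: "k \<in> K" by simp
      have "ennreal (weight k) * ennreal (flow k k' / weight k) = ennreal (weight k * (flow k k' / weight k))"
        using weight_pos[OF k] flow_nonneg[of k k'] by (intro ennreal_mult[symmetric]) auto
      also have "weight k * (flow k k' / weight k) = flow k' k" using weight_pos[OF k] by (simp add: flow_sym)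
      finally show "ennreal (weight k) * ennreal (flow k k' / weight k) = ennreal (flow k' k)" .
    qed
    also have "\<dots> = ennreal (weight k')" by (rule nn_integral_flow_row[OF k'])
    also have "\<dots> = emeasure (barPi K Psi) {k'}"
      using k' by (simp add: barPi_eq emeasure_density_count_space_singleton)
    finally show "emeasure (barPi K Psi \<bind> barP K Psi P) {k'} = emeasure (barPi K Psi) {k'}" .
  qed
qed

lemma distr_fst_P: "x \<in> space PX \<Longrightarrow> distr (P x) (count_space K) fst = density (count_space K) (\<lambda>k. ennreal (block_prob k x))"
proof -
  assume x: "x \<in> space PX"
  have fm: "fst \<in> P x \<rightarrow>\<^sub>M count_space K" unfolding measurable_cong_sets[OF P.sets_kernel[OF x] refl] by (rule measurable_fst_PX)
  show ?thesis
  proof (rule sym, rule density_discrete[OF K(1)])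
    show "sets (distr (P x) (count_space K) fst) = Pow K" by simp
    show "\<And>k. 0 \<le> ennreal (block_prob k x)" by simp
    fix k assume k: "k \<in> K"
    have "fst -` {k} \<inter> space (P x) = block k"
      using sets_eq_imp_space_eq[OF P.sets_kernel[OF x]] k by (auto simp: block_def space_PX Xspace_def)
    then show "ennreal (block_prob k x) = emeasure (distr (P x) (count_space K) fst) {k}"
      using k by (simp add: emeasure_distr[OF fm] emeasure_block_eq[OF x])
  qed
qed

lemma measurable_fst_P: "x \<in> space PX \<Longrightarrow> fst \<in> P x \<rightarrow>\<^sub>M count_space K"
  unfolding measurable_cong_sets[OF P.sets_kernel refl] by (rule measurable_fst_PX)

lemma integral_P_fst: "x \<in> space PX \<Longrightarrow> (\<integral>y. h (fst y) \<partial>P x) = (\<integral>k. block_prob k x * h k \<partial>count_space K)"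
proof -
  assume x: "x \<in> space PX"
  have "(\<integral>y. h (fst y) \<partial>P x) = (\<integral>k. h k \<partial>distr (P x) (count_space K) fst)"
    by (rule integral_distr[symmetric, OF measurable_fst_P[OF x]]) simp
  also have "\<dots> = (\<integral>k. block_prob k x * h k \<partial>count_space K)"
    unfolding distr_fst_P[OF x] by (subst integral_density) (auto simp: block_prob_nonneg)
  finally show ?thesis .
qed

lemma nn_integral_P_fst: "x \<in> space PX \<Longrightarrow> (\<integral>\<^sup>+y. h (fst y) \<partial>P x) = (\<integral>\<^sup>+k. ennreal (block_prob k x) * h k \<partial>count_space K)"
proof -
  assume x: "x \<in> space PX"
  have "(\<integral>\<^sup>+y. h (fst y) \<partial>P x) = (\<integral>\<^sup>+k. h k \<partial>distr (P x) (count_space K) fst)"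
    by (rule nn_integral_distr[symmetric, OF measurable_fst_P[OF x]]) simp
  also have "\<dots> = (\<integral>\<^sup>+k. ennreal (block_prob k x) * h k \<partial>count_space K)"
    unfolding distr_fst_P[OF x] by (subst nn_integral_density) auto
  finally show ?thesis .
qed

lemma Fubini_count_space_PX:
  fixes F :: "'k \<Rightarrow> 'k \<times> 'z \<Rightarrow> real"
  assumes Fm: "\<And>k. k \<in> K \<Longrightarrow> F k \<in> borel_measurable PX"
    and bnd: "(\<integral>\<^sup>+x. \<integral>\<^sup>+k. ennreal (norm (F k x)) \<partial>count_space K \<partial>PX) < \<infinity>"
  shows "(\<integral>x. (\<integral>k. F k x \<partial>count_space K) \<partial>PX) = (\<integral>k. (\<integral>x. F k x \<partial>PX) \<partial>count_space K)"
proof -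
  interpret ps: pair_sigma_finite "count_space K" PX by (rule pair_sigma_finite_K_PX)
  have meas: "(\<lambda>(k, x). F k x) \<in> borel_measurable (count_space K \<Otimes>\<^sub>M PX)"
    by (rule measurable_pair_measure_countable1[OF K(1)]) (use Fm in simp)
  have meas2: "(\<lambda>(k, x). ennreal (norm (F k x))) \<in> borel_measurable (count_space K \<Otimes>\<^sub>M PX)"
    using meas by measurable
  have "integrable (count_space K \<Otimes>\<^sub>M PX) (\<lambda>(k, x). F k x)"
  proof (subst integrable_iff_bounded, intro conjI meas)
    have "(\<integral>\<^sup>+y. ennreal (norm (case y of (k, x) \<Rightarrow> F k x)) \<partial>(count_space K \<Otimes>\<^sub>M PX))
       = (\<integral>\<^sup>+x. \<integral>\<^sup>+k. ennreal (norm (F k x)) \<partial>count_space K \<partial>PX)"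
      using ps.nn_integral_snd[OF meas2] by (simp add: case_prod_beta')
    then show "(\<integral>\<^sup>+y. ennreal (norm (case y of (k, x) \<Rightarrow> F k x)) \<partial>(count_space K \<Otimes>\<^sub>M PX)) < \<infinity>"
      using bnd by simp
  qed
  from ps.Fubini_integral[OF this] show ?thesis by simp
qed

context
  fixes f :: "'k \<times> 'z \<Rightarrow> real"
  assumes fm: "f \<in> borel_measurable PX" and f2: "integrable PX (\<lambda>x. (f x)\<^sup>2)"
begin

lemma integral_block_prob_P_cond_mean:
  assumes k: "k \<in> K"
  shows "(\<integral>x. block_prob k x * (\<integral>y. cond_mean f y \<partial>P x) \<partial>PX) = (\<integral>k'. flow k k' * block_mean f k' \<partial>count_space K)"
proof -
  define F where "F k' x = block_prob k x * (block_prob k' x * block_mean f k')" for k' x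
  have "(\<integral>x. block_prob k x * (\<integral>y. cond_mean f y \<partial>P x) \<partial>PX) = (\<integral>x. (\<integral>k'. F k' x \<partial>count_space K) \<partial>PX)"
    by (rule Bochner_Integration.integral_cong[OF refl]) (simp add: F_def cond_mean_def integral_P_fst)
  also have "\<dots> = (\<integral>k'. (\<integral>x. F k' x \<partial>PX) \<partial>count_space K)"
  proof (rule Fubini_count_space_PX)
    show "\<And>k'. k' \<in> K \<Longrightarrow> F k' \<in> borel_measurable PX" unfolding F_def using k by measurable
    have "(\<integral>\<^sup>+x. \<integral>\<^sup>+k'. ennreal (norm (F k' x)) \<partial>count_space K \<partial>PX)
        \<le> (\<integral>\<^sup>+x. \<integral>\<^sup>+k'. ennreal (block_prob k' x) * ennreal \<bar>block_mean f k'\<bar> \<partial>count_space K \<partial>PX)"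
    proof (intro nn_integral_mono)
      fix x k' assume x: "x \<in> space PX"
      have "\<bar>F k' x\<bar> \<le> block_prob k' x * \<bar>block_mean f k'\<bar>"
        using block_prob_le_1[OF x, of k] block_prob_nonneg[of k x] block_prob_nonneg[of k' x]
        by (simp add: F_def abs_mult mult_left_le_one_le mult_nonneg_nonneg)
      then show "ennreal (norm (F k' x)) \<le> ennreal (block_prob k' x) * ennreal \<bar>block_mean f k'\<bar>"
        by (simp add: ennreal_mult[symmetric] block_prob_nonneg)
    qed
    also have "\<dots> = (\<integral>\<^sup>+x. \<integral>\<^sup>+y. ennreal \<bar>cond_mean f y\<bar> \<partial>P x \<partial>PX)"
      using nn_integral_P_fst[of _ "\<lambda>k. ennreal \<bar>block_mean f k\<bar>"]
      by (intro nn_integral_cong) (simp add: cond_mean_def)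
    also have "\<dots> = (\<integral>\<^sup>+x. ennreal \<bar>cond_mean f x\<bar> \<partial>PX)"
      by (rule P.nn_integral_kernel_invariant) measurable
    also have "\<dots> < \<infinity>"
      using cond_mean_integrable[OF fm f2] by (simp add: integrable_iff_bounded)
    finally show "(\<integral>\<^sup>+x. \<integral>\<^sup>+k'. ennreal (norm (F k' x)) \<partial>count_space K \<partial>PX) < \<infinity>" .
  qed
  also have "\<dots> = (\<integral>k'. flow k k' * block_mean f k' \<partial>count_space K)"
    by (rule Bochner_Integration.integral_cong[OF refl]) (simp add: F_def flow_def mult_ac)
  finally show ?thesis .
qed

lemma integral_P_cond_mean_square:
  "(\<integral>x. (\<integral>y. cond_mean f y \<partial>P x)\<^sup>2 \<partial>PX)
    = (\<integral>k. block_mean f k * (\<integral>x. block_prob k x * (\<integral>y. cond_mean f y \<partial>P x) \<partial>PX) \<partial>count_space K)"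
proof -
  define G where "G x = (\<integral>y. cond_mean f y \<partial>P x)" for x
  define F where "F k x = block_mean f k * (block_prob k x * G x)" for k x
  have G_eq: "G x = (\<integral>k. block_prob k x * block_mean f k \<partial>count_space K)" if "x \<in> space PX" for x
    unfolding G_def cond_mean_def by (rule integral_P_fst[OF that])
  have "(\<integral>x. (G x)\<^sup>2 \<partial>PX) = (\<integral>x. (\<integral>k. F k x \<partial>count_space K) \<partial>PX)"
  proof (rule Bochner_Integration.integral_cong[OF refl])
    fix x assume "x \<in> space PX"
    then have "(G x)\<^sup>2 = (\<integral>k. block_prob k x * block_mean f k \<partial>count_space K) * G x"
      by (simp add: G_eq power2_eq_square)
    then show "(G x)\<^sup>2 = (\<integral>k. F k x \<partial>count_space K)" by (simp add: F_def mult_ac)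
  qed
  also have "\<dots> = (\<integral>k. (\<integral>x. F k x \<partial>PX) \<partial>count_space K)"
  proof (rule Fubini_count_space_PX)
    show "\<And>k. k \<in> K \<Longrightarrow> F k \<in> borel_measurable PX" unfolding F_def G_def by measurable
    have "(\<integral>\<^sup>+x. \<integral>\<^sup>+k. ennreal (norm (F k x)) \<partial>count_space K \<partial>PX)
        = (\<integral>\<^sup>+x. ennreal \<bar>G x\<bar> * (\<integral>\<^sup>+y. ennreal \<bar>cond_mean f y\<bar> \<partial>P x) \<partial>PX)"
    proof (intro nn_integral_cong)
      fix x assume x: "x \<in> space PX"
      have "(\<integral>\<^sup>+k. ennreal (norm (F k x)) \<partial>count_space K)
          = (\<integral>\<^sup>+k. ennreal \<bar>G x\<bar> * (ennreal (block_prob k x) * ennreal \<bar>block_mean f k\<bar>) \<partial>count_space K)"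
        by (intro nn_integral_cong) (simp add: F_def abs_mult block_prob_nonneg ennreal_mult[symmetric] mult_ac)
      also have "\<dots> = ennreal \<bar>G x\<bar> * (\<integral>\<^sup>+y. ennreal \<bar>cond_mean f y\<bar> \<partial>P x)"
        using nn_integral_P_fst[OF x, of "\<lambda>k. ennreal \<bar>block_mean f k\<bar>"]
        by (simp add: nn_integral_cmult cond_mean_def)
      finally show "(\<integral>\<^sup>+k. ennreal (norm (F k x)) \<partial>count_space K)
          = ennreal \<bar>G x\<bar> * (\<integral>\<^sup>+y. ennreal \<bar>cond_mean f y\<bar> \<partial>P x)" .
    qed
    also have "\<dots> < \<infinity>" unfolding G_def
      by (rule P.nn_integral_kernel_abs_mult_finite[OF measurable_cond_mean cond_mean_square_integrable[OF fm f2]])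
    finally show "(\<integral>\<^sup>+x. \<integral>\<^sup>+k. ennreal (norm (F k x)) \<partial>count_space K \<partial>PX) < \<infinity>" .
  qed
  also have "\<dots> = (\<integral>k. block_mean f k * (\<integral>x. block_prob k x * G x \<partial>PX) \<partial>count_space K)"
    by (simp add: F_def)
  finally show ?thesis unfolding G_def .
qed

end

lemma integral_barP: "k \<in> K \<Longrightarrow> (\<integral>k'. h k' \<partial>barP K Psi P k) = (\<integral>k'. flow k k' * h k' \<partial>count_space K) / weight k"
proof -
  assume k: "k \<in> K"
  have "(\<integral>k'. h k' \<partial>barP K Psi P k) = (\<integral>k'. (flow k k' / weight k) * h k' \<partial>count_space K)"
    unfolding barP_eq[OF k] by (subst integral_density) (auto simp: flow_nonneg weight_pos[OF k] less_imp_le)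
  also have "\<dots> = (\<integral>k'. flow k k' * h k' / weight k \<partial>count_space K)" by (simp add: mult.commute)
  also have "\<dots> = (\<integral>k'. flow k k' * h k' \<partial>count_space K) / weight k" by simp
  finally show ?thesis .
qed

lemma weight_nonneg: "0 \<le> weight k" by (simp add: weight_def)

lemma integral_barPi: "(\<integral>k. h k \<partial>barPi K Psi) = (\<integral>k. weight k * h k \<partial>count_space K)"
  unfolding barPi_eq by (subst integral_density) (auto simp: weight_nonneg)

lemma integrable_barPi_iff: "integrable (barPi K Psi) h \<longleftrightarrow> integrable (count_space K) (\<lambda>k. weight k * h k)"
  unfolding barPi_eq by (subst integrable_density) (auto simp: weight_nonneg)

context
  fixes f :: "'k \<times> 'z \<Rightarrow> real"
  assumes fm: "f \<in> borel_measurable PX" and f2: "integrable PX (\<lambda>x. (f x)\<^sup>2)"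
    and f0: "(\<integral>x. f x \<partial>PX) = 0"
begin

lemma integral_P_cond_mean_square_barP:
  "(\<integral>x. (\<integral>y. cond_mean f y \<partial>P x)\<^sup>2 \<partial>PX)
    = (\<integral>k. block_mean f k * (\<integral>k'. block_mean f k' \<partial>barP K Psi P k) \<partial>barPi K Psi)"
proof -
  have "(\<integral>k. block_mean f k * (\<integral>k'. block_mean f k' \<partial>barP K Psi P k) \<partial>barPi K Psi)
      = (\<integral>k. weight k * (block_mean f k * (\<integral>k'. block_mean f k' \<partial>barP K Psi P k)) \<partial>count_space K)"
    by (rule integral_barPi)
  also have "\<dots> = (\<integral>k. block_mean f k * (\<integral>x. block_prob k x * (\<integral>y. cond_mean f y \<partial>P x) \<partial>PX) \<partial>count_space K)"
  proof (rule Bochner_Integration.integral_cong[OF refl])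
    fix k assume "k \<in> space (count_space K)"
    then have k: "k \<in> K" by simp
    show "weight k * (block_mean f k * (\<integral>k'. block_mean f k' \<partial>barP K Psi P k))
        = block_mean f k * (\<integral>x. block_prob k x * (\<integral>y. cond_mean f y \<partial>P x) \<partial>PX)"
      using weight_pos[OF k] by (simp add: integral_barP[OF k] integral_block_prob_P_cond_mean[OF fm f2 k])
  qed
  also have "\<dots> = (\<integral>x. (\<integral>y. cond_mean f y \<partial>P x)\<^sup>2 \<partial>PX)"
    by (rule integral_P_cond_mean_square[OF fm f2, symmetric])
  finally show ?thesis ..
qed

lemma measurable_block_mean: "block_mean f \<in> borel_measurable (barPi K Psi)"
  unfolding measurable_cong_sets[OF sets_barPi[unfolded sets_count_space[of K, symmetric]] refl] by simp

lemma integrable_block_mean_square: "integrable (barPi K Psi) (\<lambda>k. (block_mean f k)\<^sup>2)"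
proof -
  have "integrable (count_space K) (\<lambda>k. weight k * (\<integral>z. (cond_mean f (k, z))\<^sup>2 \<partial>Phi k))"
    using integral_PX(1)[OF cond_mean_square_integrable[OF fm f2]] .
  then have "integrable (count_space K) (\<lambda>k. weight k * (block_mean f k)\<^sup>2)"
    by (rule Bochner_Integration.integrable_cong[THEN iffD1, OF refl, rotated])
       (simp add: cond_mean_def measure_Phi_space)
  then show ?thesis by (simp add: integrable_barPi_iff)
qed

lemma integral_block_mean: "(\<integral>k. block_mean f k \<partial>barPi K Psi) = 0"
  using integral_PX_block_mean[OF fm f2] f0 by (simp add: integral_barPi)

lemma integral_block_mean_square:
  "(\<integral>k. (block_mean f k)\<^sup>2 \<partial>barPi K Psi) = (\<integral>x. (cond_mean f x)\<^sup>2 \<partial>PX)"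
  using integral_cond_mean_square[OF fm f2] by (simp add: integral_barPi)

lemma between_block_bound_P:
  "(\<integral>x. (\<integral>y. cond_mean f y \<partial>P x)\<^sup>2 \<partial>PX) \<le> lambda1 K Psi P * (\<integral>x. (cond_mean f x)\<^sup>2 \<partial>PX)"
proof -
  interpret bar: invariant_kernel "barPi K Psi" "barP K Psi P" by (rule invariant_barP)
  define h where "h k = (\<integral>k'. block_mean f k' \<partial>barP K Psi P k)" for k
  note m = measurable_block_mean and m2 = integrable_block_mean_square
  have hm: "h \<in> borel_measurable (barPi K Psi)"
    unfolding h_def by (rule bar.borel_measurable_kernel_integral[OF m])
  have "(\<integral>k. block_mean f k * h k \<partial>barPi K Psi) \<le> lambda1 K Psi P * (\<integral>k. (block_mean f k)\<^sup>2 \<partial>barPi K Psi)"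
  proof (rule le_mult_of_amgm_bounds)
    show "(\<integral>k. block_mean f k * h k \<partial>barPi K Psi)
        \<le> (s * (\<integral>k. (block_mean f k)\<^sup>2 \<partial>barPi K Psi) + (\<integral>k. (h k)\<^sup>2 \<partial>barPi K Psi) / s) / 2"
      if "0 < s" for s
      using integral_mult_le_amgm[OF m hm m2 _ that] bar.integrable_kernel_square[OF m m2]
      by (simp add: h_def)
    show "(\<integral>k. (h k)\<^sup>2 \<partial>barPi K Psi) \<le> (lambda1 K Psi P)\<^sup>2 * (\<integral>k. (block_mean f k)\<^sup>2 \<partial>barPi K Psi)"
      unfolding h_def lambda1_def by (rule bar.kernel_square_integral_le_opnorm[OF m m2 integral_block_mean])
  qed (simp_all add: lambda1_def bar.opnorm_nonneg)
  then show ?thesis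
    by (simp add: h_def integral_P_cond_mean_square_barP integral_block_mean_square)
qed

text \<open>Writing \<^term>\<open>Q\<close> as \<^term>\<open>P\<close> after \<^term>\<open>t - 1\<close> further steps, the
  contraction of those steps reduces the claim to the case of one step.\<close>
lemma between_block_bound:
  "(\<integral>x. (\<integral>y. cond_mean f y \<partial>Q x)\<^sup>2 \<partial>PX) \<le> lambda1 K Psi P * (\<integral>x. (cond_mean f x)\<^sup>2 \<partial>PX)"
proof -
  define R where "R = kpow PX P (t - 1)"
  interpret R: invariant_kernel PX R unfolding R_def by (rule P.invariant_kernel_kpow)
  note g = measurable_cond_mean and g2 = cond_mean_square_integrable[OF fm f2]
  have ae: "AE x in PX. (\<integral>y. cond_mean f y \<partial>Q x) = (\<integral>y. (\<integral>z. cond_mean f z \<partial>P y) \<partial>R x)"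
    using Q.AE_integrable_kernel[OF cond_mean_integrable[OF fm f2]]
  proof (rule AE_mp, intro AE_I2 impI)
    fix x assume x: "x \<in> space PX" and i: "integrable (Q x) (cond_mean f)"
    have "Q x = bind (R x) P"
      using t_pos P.kpow_Suc_right[OF x, of "t - 1"] by (simp add: Q_def R_def)
    moreover have "P \<in> R x \<rightarrow>\<^sub>M prob_algebra PX"
      unfolding measurable_cong_sets[OF R.sets_kernel[OF x] refl] by (rule P_kernel)
    ultimately show "(\<integral>y. cond_mean f y \<partial>Q x) = (\<integral>y. (\<integral>z. cond_mean f z \<partial>P y) \<partial>R x)"
      using integral_bind_kernel(2) prob_space.not_empty[OF R.prob_space_kernel[OF x]] i by metis
  qed
  have "(\<integral>x. (\<integral>y. cond_mean f y \<partial>Q x)\<^sup>2 \<partial>PX) = (\<integral>x. (\<integral>y. (\<integral>z. cond_mean f z \<partial>P y) \<partial>R x)\<^sup>2 \<partial>PX)"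
  proof (rule integral_cong_AE)
    show "(\<lambda>x. (\<integral>y. cond_mean f y \<partial>Q x)\<^sup>2) \<in> borel_measurable PX"
      using Q.borel_measurable_kernel_integral[OF g] by measurable
    show "(\<lambda>x. (\<integral>y. (\<integral>z. cond_mean f z \<partial>P y) \<partial>R x)\<^sup>2) \<in> borel_measurable PX"
      using R.borel_measurable_kernel_integral[OF P.borel_measurable_kernel_integral[OF g]] by measurable
  qed (use ae in auto)
  also have "\<dots> \<le> (\<integral>x. (\<integral>y. cond_mean f y \<partial>P x)\<^sup>2 \<partial>PX)"
    by (rule R.kernel_square_integral_le[OF P.borel_measurable_kernel_integral[OF g] P.integrable_kernel_square[OF g g2]])
  also have "\<dots> \<le> lambda1 K Psi P * (\<integral>x. (cond_mean f x)\<^sup>2 \<partial>PX)"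
    by (rule between_block_bound_P)
  finally show ?thesis .
qed

end

end

section \<open>Combining the two estimates\<close>

lemma cross_term_lower_bound:
  fixes rho ta s nf r C qg :: real
  assumes rho: "0 \<le> rho" "rho \<le> 1" and ta: "0 < ta" and s: "0 \<le> s" "s \<le> nf" "nf \<le> 1"
    and qg: "0 \<le> qg" and r: "rho - ta\<^sup>2 \<le> r"
    and D: "r - 2 * ta * C + ta\<^sup>2 * qg \<le> rho * (nf - 2 * ta * s + ta\<^sup>2 * s)"
  shows "rho * s - ta \<le> C"
proof -
  have "rho * nf \<le> rho" "rho * s \<le> 1" using rho s by (auto simp: mult_left_le mult_le_one)
  moreover have "0 \<le> ta\<^sup>2 * qg" "ta\<^sup>2 * (rho * s) \<le> ta\<^sup>2" using qg \<open>rho * s \<le> 1\<close>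
    by (auto simp: mult_left_le)
  ultimately have "2 * ta * (rho * s) - 2 * ta * ta \<le> 2 * ta * C"
    using D r by (simp add: algebra_simps power2_eq_square)
  then have "2 * ta * (rho * s - ta) \<le> 2 * ta * C" by (simp add: algebra_simps)
  then show ?thesis using ta by simp
qed

lemma cross_term_upper_bound:
  fixes la rho ta s nf r C qg :: real
  assumes la: "0 \<le> la" and rho: "0 < rho" and ta: "0 < ta" and s: "0 \<le> s" "s \<le> nf" "nf \<le> 1"
    and qg: "0 \<le> qg" "qg \<le> la * s" and r: "r \<le> rho * nf"
    and AM: "\<And>\<sigma>. 0 < \<sigma> \<Longrightarrow> C \<le> (\<sigma> * r + qg / \<sigma>) / 2"
  shows "C \<le> (la + ta + rho * s) / 2"
proof -
  define \<sigma> where "\<sigma> = (la + ta) / rho"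
  have \<sigma>: "0 < \<sigma>" unfolding \<sigma>_def using la ta rho by simp
  have "rho * nf \<le> rho" using rho s by (simp add: mult_left_le)
  then have "\<sigma> * r \<le> \<sigma> * rho" using r \<sigma> by (simp add: mult_left_mono)
  also have "\<dots> = la + ta" unfolding \<sigma>_def using rho by simp
  finally have 1: "\<sigma> * r \<le> la + ta" .
  have "qg / \<sigma> = qg * rho / (la + ta)" unfolding \<sigma>_def using rho ta la by (simp add: field_simps)
  also have "\<dots> \<le> la * s * rho / (la + ta)"
    using qg rho la ta by (intro divide_right_mono mult_right_mono) auto
  also have "\<dots> = (la / (la + ta)) * (rho * s)" by (simp add: field_simps)
  also have "\<dots> \<le> rho * s" using la ta rho s by (intro mult_left_le_one_le) auto
  finally have 2: "qg / \<sigma> \<le> rho * s" .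
  have "(\<sigma> * r + qg / \<sigma>) / 2 \<le> (la + ta + rho * s) / 2"
    using add_mono[OF 1 2] by (rule divide_right_mono) simp
  then show ?thesis using AM[OF \<sigma>] by linarith
qed

text \<open>An almost extremal \<open>f\<close> loses at most the fraction \<open>1 - al\<close> of its energy
  inside the blocks and at most \<open>la\<close> between them; the cross term of \<open>f - ta * g\<close> ties the two
  estimates together.\<close>
lemma gap_inequality_real:
  fixes al la rho ta s nf r C qg :: real
  assumes al: "0 \<le> al" "al \<le> 1" and la: "0 \<le> la" and rho: "0 \<le> rho" "rho \<le> 1" and ta: "0 < ta"
    and s: "0 \<le> s" "s \<le> nf" "nf \<le> 1" and qg: "0 \<le> qg" "qg \<le> la * s"
    and r1: "rho - ta\<^sup>2 \<le> r" and r2: "r \<le> (1 - al) * nf + al * s" and r3: "r \<le> rho * nf"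
    and D: "r - 2 * ta * C + ta\<^sup>2 * qg \<le> rho * (nf - 2 * ta * s + ta\<^sup>2 * s)"
    and AM: "\<And>\<sigma>. 0 < \<sigma> \<Longrightarrow> C \<le> (\<sigma> * r + qg / \<sigma>) / 2"
  shows "al * (1 - la) \<le> 1 - rho\<^sup>2 + ta\<^sup>2 + 3 * ta"
proof (cases "rho = 0")
  case True
  have "al * (1 - la) \<le> al" using al la by (intro mult_left_le) auto
  then have "al * (1 - la) \<le> 1" using al by linarith
  moreover have "0 \<le> ta\<^sup>2 + 3 * ta" using ta by simp
  moreover have "rho\<^sup>2 = 0" using True by simp
  ultimately show ?thesis by linarith
next
  case False
  then have rho_pos: "0 < rho" using rho by simp
  have "C \<le> (la + ta + rho * s) / 2"
    by (rule cross_term_upper_bound[OF la rho_pos ta s qg r3]) (rule AM)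
  then have "rho * s - ta \<le> (la + ta + rho * s) / 2"
    using cross_term_lower_bound[OF rho ta s qg(1) r1 D] by (rule order_trans[rotated])
  then have "rho * s - la \<le> 3 * ta" by simp
  then have "al * (rho * s - la) \<le> al * (3 * ta)" using al(1) by (rule mult_left_mono)
  also have "\<dots> \<le> 3 * ta" using al ta by (simp add: mult_left_le_one_le)
  finally have "al * (rho * s - la) \<le> 3 * ta" .
  moreover have "(1 - al) * nf \<le> 1 - al" using al s by (simp add: mult_left_le)
  then have "al * (1 - s) \<le> 1 - rho + ta\<^sup>2" using r1 r2 by (simp add: algebra_simps)
  then have "rho * (al * (1 - s)) \<le> rho * (1 - rho + ta\<^sup>2)" using rho by (simp add: mult_left_mono)
  moreover have "al * (1 - rho) \<le> 1 - rho" using al rho by (simp add: mult_left_le_one_le)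
  moreover have "rho * ta\<^sup>2 \<le> ta\<^sup>2" using rho by (simp add: mult_left_le_one_le)
  ultimately show ?thesis by (simp add: algebra_simps power2_eq_square)
qed

context block_minorisation
begin

lemma lambda1_nonneg: "0 \<le> lambda1 K Psi P"
  unfolding lambda1_def by (rule invariant_kernel.opnorm_nonneg[OF invariant_barP])

lemma near_extremal_bound:
  assumes ta: "0 < ta"
  shows "a * (1 - b\<^sup>2) * (1 - lambda1 K Psi P) \<le> 1 - ((opnorm PX Q)\<^sup>2)\<^sup>2 + ta\<^sup>2 + 3 * ta"
proof -
  obtain f :: "'k \<times> 'z \<Rightarrow> real" where fm: "f \<in> borel_measurable PX"
    and f2: "integrable PX (\<lambda>x. (f x)\<^sup>2)" and f0: "(\<integral>x. f x \<partial>PX) = 0"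
    and f_le: "(\<integral>x. (f x)\<^sup>2 \<partial>PX) \<le> 1"
    and f_ext: "(opnorm PX Q)\<^sup>2 - ta\<^sup>2 \<le> (\<integral>x. (\<integral>y. f y \<partial>Q x)\<^sup>2 \<partial>PX)"
    using Q.opnorm_approx[of "ta\<^sup>2"] ta by auto
  define g :: "'k \<times> 'z \<Rightarrow> real" where "g = cond_mean f"
  define nf where "nf = (\<integral>x. (f x)\<^sup>2 \<partial>PX)"
  define s where "s = (\<integral>x. (g x)\<^sup>2 \<partial>PX)"
  define r where "r = (\<integral>x. (\<integral>y. f y \<partial>Q x)\<^sup>2 \<partial>PX)"
  define qg where "qg = (\<integral>x. (\<integral>y. g y \<partial>Q x)\<^sup>2 \<partial>PX)"
  define C where "C = (\<integral>x. (\<integral>y. f y \<partial>Q x) * (\<integral>y. g y \<partial>Q x) \<partial>PX)"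
  have gm: "g \<in> borel_measurable PX" unfolding g_def by (rule measurable_cond_mean)
  have g2: "integrable PX (\<lambda>x. (g x)\<^sup>2)" unfolding g_def by (rule cond_mean_square_integrable[OF fm f2])
  have within: "(\<integral>x. (f x - g x)\<^sup>2 \<partial>PX) = nf - s"
    unfolding g_def nf_def s_def by (rule integral_within[OF fm f2])
  have s_le: "s \<le> nf" using within integral_nonneg_AE[of "\<lambda>x. (f x - g x)\<^sup>2" PX] by simp
  have "a * (1 - b\<^sup>2) * (nf - s) \<le> nf - r"
    using within_block_bound[OF fm f2] within by (simp add: g_def nf_def r_def)
  then have r_within: "r \<le> (1 - a * (1 - b\<^sup>2)) * nf + a * (1 - b\<^sup>2) * s"
    by (simp add: algebra_simps)
  have r_opnorm: "r \<le> (opnorm PX Q)\<^sup>2 * nf"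
    unfolding r_def nf_def by (rule Q.kernel_square_integral_le_opnorm[OF fm f2 f0])
  have qg_le: "qg \<le> lambda1 K Psi P * s"
    unfolding qg_def s_def g_def by (rule between_block_bound[OF fm f2 f0])
  have AM: "C \<le> (\<sigma> * r + qg / \<sigma>) / 2" if "0 < \<sigma>" for \<sigma>
    unfolding C_def r_def qg_def
    by (rule integral_mult_le_amgm[OF Q.borel_measurable_kernel_integral[OF fm]
          Q.borel_measurable_kernel_integral[OF gm] Q.integrable_kernel_square[OF fm f2]
          Q.integrable_kernel_square[OF gm g2] that])
  have g0: "(\<integral>x. g x \<partial>PX) = 0" unfolding g_def using integral_cond_mean[OF fm f2] f0 by simp
  have D: "r - 2 * ta * C + ta\<^sup>2 * qg \<le> (opnorm PX Q)\<^sup>2 * (nf - 2 * ta * s + ta\<^sup>2 * s)"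
    using Q.kernel_square_integral_diff_le_opnorm[OF fm f2 f0 gm g2 g0, of ta]
      integral_mult_cond_mean[OF fm f2]
    by (simp add: r_def C_def qg_def nf_def s_def g_def)
  show ?thesis
  proof (rule gap_inequality_real[OF gap_factor_bounds lambda1_nonneg _ _ ta _ s_le _ _ qg_le _ r_within r_opnorm D AM])
    show "0 \<le> (opnorm PX Q)\<^sup>2" "(opnorm PX Q)\<^sup>2 \<le> 1"
      using Q.opnorm_nonneg Q.opnorm_le_1 by (auto simp: power_le_one)
    show "0 \<le> s" "0 \<le> qg" by (simp_all add: s_def qg_def)
    show "nf \<le> 1" using f_le by (simp add: nf_def)
    show "(opnorm PX Q)\<^sup>2 - ta\<^sup>2 \<le> r" using f_ext by (simp add: r_def)
  qed
qed

lemma spectral_gap_bound: "a\<^sup>2 * (1 - b\<^sup>2) * (1 - lambda1 K Psi P) \<le> 1 - (opnorm PX Q) ^ 4"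
proof -
  define N where "N = opnorm PX Q"
  define la where "la = lambda1 K Psi P"
  have "a * (1 - b\<^sup>2) * (1 - la) \<le> 1 - N ^ 4"
  proof (rule field_le_epsilon)
    fix e :: real assume e: "0 < e"
    define ta where "ta = min 1 (e / 4)"
    have ta: "0 < ta" "ta \<le> 1" "ta \<le> e / 4" using e by (auto simp: ta_def)
    have "ta\<^sup>2 \<le> ta" using ta by (simp add: power2_eq_square mult_left_le_one_le)
    moreover have "N ^ 4 = (N\<^sup>2)\<^sup>2" by simp
    ultimately show "a * (1 - b\<^sup>2) * (1 - la) \<le> 1 - N ^ 4 + e"
      using near_extremal_bound[OF ta(1)] ta by (simp add: N_def la_def)
  qed
  moreover have "a\<^sup>2 * (1 - b\<^sup>2) * (1 - la) \<le> a * (1 - b\<^sup>2) * (1 - la)" if "0 \<le> 1 - la"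
  proof -
    have "0 \<le> a * (1 - b\<^sup>2) * (1 - la)" using gap_factor_bounds(1) that by simp
    then have "a * (a * (1 - b\<^sup>2) * (1 - la)) \<le> 1 * (a * (1 - b\<^sup>2) * (1 - la))"
      using a_le_1 by (rule mult_right_mono[rotated])
    then show ?thesis by (simp add: power2_eq_square mult.assoc)
  qed
  moreover have "a\<^sup>2 * (1 - b\<^sup>2) * (1 - la) \<le> 0" if "1 - la < 0"
    using that a_nonneg b_nonneg b_le_1 by (intro mult_nonneg_nonpos) (auto simp: power_le_one)
  moreover have "N ^ 4 \<le> 1" using Q.opnorm_nonneg Q.opnorm_le_1 by (simp add: N_def power_le_one)
  ultimately show ?thesis by (fastforce simp: N_def la_def)
qed

end

theorem mainTheorem5:
  fixes K :: "'k set" and Psi :: "'k \<Rightarrow> 'z measure"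
    and P :: "'k \<times> 'z \<Rightarrow> ('k \<times> 'z) measure"
    and Pk :: "'k \<Rightarrow> 'z \<Rightarrow> 'z measure" and c :: "'k \<Rightarrow> real" and t :: nat
  assumes K: "countable K" "K \<noteq> {}"
    and Z_ne: "\<And>k. k \<in> K \<Longrightarrow> space (Psi k) \<noteq> {}"
    and Psi_pos: "\<And>k. k \<in> K \<Longrightarrow> emeasure (Psi k) (space (Psi k)) \<noteq> 0"
    and Psi_fin: "\<And>k. k \<in> K \<Longrightarrow> emeasure (Psi k) (space (Psi k)) < \<infinity>"
    and tot_fin: "total_mass K Psi < \<infinity>"
    and P_kernel: "P \<in> PiX K Psi \<rightarrow>\<^sub>M prob_algebra (PiX K Psi)"
    and P_inv: "bind (PiX K Psi) P = PiX K Psi"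
    and t_pos: "t > 0"
    and Pk_kernel: "\<And>k. k \<in> K \<Longrightarrow> Pk k \<in> Psi k \<rightarrow>\<^sub>M prob_algebra (Psi k)"
    and Pk_inv: "\<And>k. k \<in> K \<Longrightarrow> bind (normalise (Psi k)) (Pk k) = normalise (Psi k)"
    and Pk_gap: "\<And>k. k \<in> K \<Longrightarrow> opnorm (normalise (Psi k)) (kpow (Psi k) (Pk k) t) < 1"
    and c_pos: "\<And>k. k \<in> K \<Longrightarrow> c k > 0"
    and minor: "\<And>k z A. k \<in> K \<Longrightarrow> z \<in> space (Psi k) \<Longrightarrow> A \<in> sets (Psi k) \<Longrightarrow>
                  measure (P (k, z)) ({k} \<times> A) \<ge> c k * measure (Pk k z) A"
  shows "1 - (opnorm (PiX K Psi) (kpow (PiX K Psi) P t)) ^ 4 \<ge>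
           (INF k\<in>K. c k ^ t)\<^sup>2
           * (1 - (SUP k\<in>K. opnorm (normalise (Psi k)) (kpow (Psi k) (Pk k) t))\<^sup>2)
           * (1 - lambda1 K Psi P)"
proof -
  interpret block_minorisation K Psi P Pk c t
    using assms by unfold_locales auto
  show ?thesis
    using spectral_gap_bound by (simp add: Q_def a_def b_def Qk_def Phi_def)
qed

end
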